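(* Assume the network is UJSC, the weight rules hold, and the interior-point condition for $(\mathrm{ADRCP}^k)$ holds. Let the stepsizes $\alpha(t)>0$ be nonincreasing with $\alpha(t)=\Theta(1/\sqrt{t})$, i.e. there are constants $0<\kappa_1\le\kappa_2$ with $\kappa_1/\sqrt{t+1}\le\alpha(t)\le\kappa_2/\sqrt{t+1}$ for all $t\ge0$. For the DPG iteration $\theta_i(t+1)=P_{\Omega_i}\big[\sum_{j=1}^m a_{ij}(t)\theta_j(t)-\alpha(t)c\big]$ define $\hat\theta_i(t)=\sum_{r=0}^t\alpha(r)\theta_i(r)\big/\sum_{\tau=0}^t\alpha(\tau)$. Then there is a constant $K$ such that for all $i\in\mathcal V$ and all $t\ge 1$, $|f_0(\hat\theta_i(t))-f_0^*|\le K\,\ln(t+1)/\sqrt{t}$; i.e. $|f_0(\hat\theta_i(t))-f_0^*|=O(\ln t/\sqrt t)$.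
   Context: Network: agents $\mathcal V=\{1,\dots,m\}$. For each time slot $t\in\mathbb Z_{\ge 0}$ there is a directed graph $\mathcal G(t)=(\mathcal V,\mathcal E(t))$; $(j,i)\in\mathcal E(t)$ means agent $j$ can send information to agent $i$ at slot $t$, and $N_i^{in}(t)=\{j:(j,i)\in\mathcal E(t)\}$. UJSC (uniform joint strong connectivity): there is an integer $S>0$ such that for every $t\ge 0$ the graph $(\mathcal V,\mathcal E(t)\cup\cdots\cup\mathcal E(t+S-1))$ is strongly connected. Weight rules: $A(t)=[a_{ij}(t)]\in\mathbb R^{m\times m}$ with $a_{ij}(t)>0$ if $j\in N_i^{in}(t)$ and $a_{ij}(t)=0$ otherwise; $\sum_{j}a_{ij}(t)=1$ for all $i,t$ (row stochastic, not necessarily column stochastic); $(i,i)\in\mathcal E(t)$ for all $i,t$; and there is $\gamma\in(0,1)$ with $a_{ij}(t)\ge\gamma$ whenever $a_{ij}(t)>0$ (in particular $a_{ii}(t)\ge\gamma$). Problem data: $X\subseteq\mathbb R^n$ is nonempty, compact and convex. For each $i\in\mathcal V$: $f_i:\mathbb R^n\to\mathbb R$ is convex; $Y_i\subseteq\mathbb R$ is nonempty, compact, convex; $g_i:\mathbb R^n\times Y_i\to\mathbb R$ is continuous on $X\times Y_i$ and convex in $x$ for each fixed $y$; $Y_i^k\subset Y_i$ is a finite set and $\epsilon_i^k>0$. The problem $(\mathrm{ADRCP}^k)$ is: minimize $\sum_{i=1}^m f_i(x)$ over $x\in X$ subject to $g_i(x,y)\le-\epsilon_i^k$ for all $y\in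 Y_i^k$ and all $i$. Interior-point condition: the feasible set of $(\mathrm{ADRCP}^k)$ is nonempty and there is $\tilde x$ in it with $g_i(\tilde x,y)<-\epsilon_i^k$ for all $y\in Y_i^k$, $i\in\mathcal V$. Epigraphic reformulation: $\theta=(x,u)\in\Theta=X\times\mathbb R^m$; $\Omega_i=\{(x,u)\in\Theta: f_i(x)-u_i\le 0,\ g_i(x,y)\le-\epsilon_i^k\ \forall y\in Y_i^k\}$; $\Omega=\bigcap_{i=1}^m\Omega_i$; $c=(0_n,\tfrac1m\mathbf 1_m)\in\mathbb R^{n+m}$ and $f_0(\theta)=c^\top\theta=\tfrac1m\sum_i u_i$. $\Omega^*$ is the set of minimizers of $f_0$ over $\Omega$ and $f_0^*$ the optimal value. $P_K$ denotes Euclidean projection onto a closed convex set $K$. Initial points $\theta_i(0)\in\mathbb R^{n+m}$ are arbitrary. *)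

theory Defs
  imports "HOL-Analysis.Analysis"
begin

text \<open>Agents are the elements of a finite type 'm (V = UNIV). Decision variable x lives in
  real^'n; the epigraphic variable is theta = (x,u) in real^'n \<times> real^'m (Euclidean R^(n+m)).\<close>

definition strongly_connected :: "('m \<times> 'm) set \<Rightarrow> bool" where
  "strongly_connected E \<longleftrightarrow> (\<forall>i j. (i, j) \<in> E\<^sup>*)"

text \<open>Uniform joint strong connectivity; (j,i) in E t means j can send to i at slot t.\<close>
definition UJSC :: "(nat \<Rightarrow> ('m \<times> 'm) set) \<Rightarrow> bool" where
  "UJSC E \<longleftrightarrow> (\<exists>S::nat. S > 0 \<and> (\<forall>t. strongly_connected (\<Union>s\<in>{t..<t+S}. E s)))"

definition weight_rules ::
  "(nat \<Rightarrow> ('m::finite \<times> 'm) set) \<Rightarrow> (nat \<Rightarrow> 'm \<Rightarrow> 'm \<Rightarrow> real) \<Rightarrow> real \<Rightarrow> bool" where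
  "weight_rules E a \<gamma> \<longleftrightarrow>
     (\<forall>t i j. ((j, i) \<in> E t \<longrightarrow> a t i j > 0) \<and> ((j, i) \<notin> E t \<longrightarrow> a t i j = 0)) \<and>
     (\<forall>t i. (\<Sum>j\<in>UNIV. a t i j) = 1) \<and>
     (\<forall>t i. (i, i) \<in> E t) \<and>
     0 < \<gamma> \<and> \<gamma> < 1 \<and>
     (\<forall>t i j. a t i j > 0 \<longrightarrow> a t i j \<ge> \<gamma>)"

definition Omega_i ::
  "(real^'n) set \<Rightarrow> ('m \<Rightarrow> real^'n \<Rightarrow> real) \<Rightarrow> ('m \<Rightarrow> real^'n \<Rightarrow> real \<Rightarrow> real)
    \<Rightarrow> ('m \<Rightarrow> real set) \<Rightarrow> ('m \<Rightarrow> real) \<Rightarrow> 'm \<Rightarrow> ((real^'n) \<times> (real^'m)) set" where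
  "Omega_i X f g Yk eps i =
     {\<theta>. fst \<theta> \<in> X \<and> f i (fst \<theta>) - snd \<theta> $ i \<le> 0 \<and> (\<forall>y\<in>Yk i. g i (fst \<theta>) y \<le> - eps i)}"

definition Omega ::
  "(real^'n) set \<Rightarrow> ('m \<Rightarrow> real^'n \<Rightarrow> real) \<Rightarrow> ('m \<Rightarrow> real^'n \<Rightarrow> real \<Rightarrow> real)
    \<Rightarrow> ('m \<Rightarrow> real set) \<Rightarrow> ('m \<Rightarrow> real) \<Rightarrow> ((real^'n) \<times> (real^'m)) set" where
  "Omega X f g Yk eps = (\<Inter>i. Omega_i X f g Yk eps i)"

definition cvec :: "(real^'n) \<times> (real^'m::finite)" where
  "cvec = (0, \<chi> i. 1 / real CARD('m))"

definition f0 :: "(real^'n) \<times> (real^'m::finite) \<Rightarrow> real" where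
  "f0 \<theta> = cvec \<bullet> \<theta>"

definition f0star ::
  "(real^'n) set \<Rightarrow> ('m::finite \<Rightarrow> real^'n \<Rightarrow> real) \<Rightarrow> ('m \<Rightarrow> real^'n \<Rightarrow> real \<Rightarrow> real)
    \<Rightarrow> ('m \<Rightarrow> real set) \<Rightarrow> ('m \<Rightarrow> real) \<Rightarrow> real" where
  "f0star X f g Yk eps = Inf (f0 ` Omega X f g Yk eps)"

end

theory Submission
  imports Defs
begin

text \<open>Under uniform joint strong connectivity, the backward products of the row-stochastic weight
  matrices converge to rank-one limits, which yields an absolute probability sequence
  \<open>\<phi>(t)\<close> with \<open>\<phi>(t)\<^sup>T = \<phi>(t+1)\<^sup>T A(t)\<close> and all entries at least \<open>\<gamma>\<^bsup>mS\<^esup>\<close>.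
  The \<open>\<phi>(t)\<close>-weighted squared distance of the agents to an optimum is then a Lyapunov function:
  it decreases by twice the step size times the optimality gap of the \<open>\<phi>\<close>-average, up to
  \<open>\<alpha>(t)\<^sup>2\<close>, and by a fixed fraction of the squared projection residuals.
  The spread of the agents contracts geometrically over windows of \<open>mS\<close> slots, perturbed only by
  the residuals and \<open>\<alpha>(t)\<close>, so the weighted disagreement is paid for by the Lyapunov decrease.
  A Slater point makes \<open>f\<^sub>0 - f\<^sub>0\<^sup>*\<close> bounded below by minus a multiple of the distance to the sets
  \<open>\<Omega>\<^sub>i\<close>, which controls the gap of the average from below and relates it to each agent.
  Altogether \<open>\<Sum>\<alpha>(r)(f\<^sub>0(\<theta>\<^sub>i(r)) - f\<^sub>0\<^sup>*) = O(\<Sum>\<alpha>(r)\<^sup>2) = O(ln t)\<close>, while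
  \<open>\<Sum>\<alpha>(r)\<close> grows like \<open>\<surd>t\<close>.\<close>

definition vmax :: "('m::finite \<Rightarrow> real) \<Rightarrow> real" where
  "vmax z = Max (range z)"

definition vmin :: "('m::finite \<Rightarrow> real) \<Rightarrow> real" where
  "vmin z = Min (range z)"

definition spread :: "('m::finite \<Rightarrow> real) \<Rightarrow> real" where
  "spread z = vmax z - vmin z"

lemma vmax_ge: "z i \<le> vmax z"
  by (simp add: vmax_def)

lemma vmin_le: "vmin z \<le> z i"
  by (simp add: vmin_def)

lemma vmax_attained: "\<exists>i. vmax z = z i"
proof -
  have "Max (range z) \<in> range z" by (rule Max_in) auto
  then show ?thesis unfolding vmax_def by (metis rangeE)
qed

lemma vmin_attained: "\<exists>i. vmin z = z i"
proof -
  have "Min (range z) \<in> range z" by (rule Min_in) auto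
  then show ?thesis unfolding vmin_def by (metis rangeE)
qed

lemma vmax_least: "(\<And>i. z i \<le> B) \<Longrightarrow> vmax z \<le> B"
  using vmax_attained by metis

lemma vmin_greatest: "(\<And>i. B \<le> z i) \<Longrightarrow> B \<le> vmin z"
  using vmin_attained by metis

lemma vmin_uminus: "vmin (\<lambda>i. - z i) = - vmax z"
proof (rule antisym)
  obtain i where "vmax z = z i" using vmax_attained by blast
  then show "vmin (\<lambda>i. - z i) \<le> - vmax z" using vmin_le[of "\<lambda>i. - z i" i] by simp
  show "- vmax z \<le> vmin (\<lambda>i. - z i)" by (rule vmin_greatest) (simp add: vmax_ge)
qed

lemma spread_nonneg: "0 \<le> spread z"
  using vmax_ge[of z i] vmin_le[of z i] unfolding spread_def by linarith

lemma abs_diff_le_spread: "\<bar>z i - z j\<bar> \<le> spread z"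
  using vmax_ge[of z i] vmax_ge[of z j] vmin_le[of z i] vmin_le[of z j]
  unfolding spread_def abs_le_iff by linarith

lemma convex_comb_ge:
  fixes w z :: "'m::finite \<Rightarrow> real"
  assumes "\<And>l. 0 \<le> w l" and "(\<Sum>l\<in>UNIV. w l) = 1" and "\<And>l. c \<le> z l"
  shows "c + w j * (z j - c) \<le> (\<Sum>l\<in>UNIV. w l * z l)"
proof -
  have "(\<Sum>l\<in>UNIV. w l * z l) = c + (\<Sum>l\<in>UNIV. w l * (z l - c))"
    using assms(2) by (simp add: algebra_simps sum_subtractf sum_distrib_left[symmetric])
  moreover have "w j * (z j - c) \<le> (\<Sum>l\<in>UNIV. w l * (z l - c))"
    by (rule member_le_sum) (use assms in auto)
  ultimately show ?thesis by linarith
qed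

lemma convex_comb_ge_bound:
  fixes w z :: "'m::finite \<Rightarrow> real"
  assumes "\<And>l. 0 \<le> w l" and "(\<Sum>l\<in>UNIV. w l) = 1" and "\<And>l. c \<le> z l"
  shows "c \<le> (\<Sum>l\<in>UNIV. w l * z l)"
proof -
  have "(\<Sum>l\<in>UNIV. w l * c) \<le> (\<Sum>l\<in>UNIV. w l * z l)"
    by (rule sum_mono) (simp add: mult_left_mono assms(1,3))
  then show ?thesis using assms(2) by (simp add: sum_distrib_right[symmetric])
qed

section \<open>Consensus under uniform joint strong connectivity\<close>

lemma rtrancl_leaves_set:
  assumes "(x, y) \<in> U\<^sup>*" "x \<in> A" "y \<notin> A"
  shows "\<exists>p q. (p, q) \<in> U \<and> p \<in> A \<and> q \<notin> A"
  using assms by (induction rule: rtrancl_induct) auto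

lemma growing_sets_cover:
  fixes R :: "nat \<Rightarrow> 'a::finite set"
  assumes mono: "\<And>n q. R n \<subseteq> R (n + q)"
    and grow: "\<And>n. R n \<noteq> UNIV \<Longrightarrow> R n \<subset> R (n + S)"
    and start: "R 0 \<noteq> {}"
  shows "R (CARD('a) * S) = UNIV"
proof -
  have "min CARD('a) (Suc q) \<le> card (R (q * S))" for q
  proof (induction q)
    case 0
    then show ?case using start by (simp add: card_gt_0_iff Suc_le_eq)
  next
    case (Suc q)
    show ?case
    proof (cases "R (q * S) = UNIV")
      case True
      then have "R (Suc q * S) = UNIV" using mono[of "q * S" S] by (auto simp: add.commute)
      then show ?thesis by simp
    next
      case False
      then have "card (R (q * S)) < card (R (Suc q * S))"
        using grow[of "q * S"] by (simp add: psubset_card_mono add.commute)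
      then show ?thesis using Suc.IH by linarith
    qed
  qed
  from this[of "CARD('a)"] show ?thesis
    using card_seteq[of UNIV "R (CARD('a) * S)"] by (auto simp: mult.commute)
qed

locale ujsc_weights =
  fixes E :: "nat \<Rightarrow> ('m::finite \<times> 'm) set" and a :: "nat \<Rightarrow> 'm \<Rightarrow> 'm \<Rightarrow> real"
    and \<gamma> :: real and S :: nat
  assumes weights: "weight_rules E a \<gamma>" and S_pos: "0 < S"
    and connected: "\<And>t. strongly_connected (\<Union>s\<in>{t..<t+S}. E s)"
begin

lemma weight_nonneg: "0 \<le> a t i j"
  using weights unfolding weight_rules_def by (metis less_eq_real_def)

lemma weight_row_sum: "(\<Sum>j\<in>UNIV. a t i j) = 1"
  using weights unfolding weight_rules_def by blast

lemma gamma_pos: "0 < \<gamma>" and gamma_less_1: "\<gamma> < 1"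
  using weights unfolding weight_rules_def by auto

lemma weight_edge_ge: "(j, i) \<in> E t \<Longrightarrow> \<gamma> \<le> a t i j"
  using weights unfolding weight_rules_def by blast

lemma weight_diag_ge: "\<gamma> \<le> a t i i"
  using weights weight_edge_ge unfolding weight_rules_def by blast

lemma contraction_factor: "0 < 1 - \<gamma> ^ (CARD('m) * S)" "1 - \<gamma> ^ (CARD('m) * S) < 1"
  using gamma_pos gamma_less_1 S_pos by (auto simp: power_less_one_iff)

lemma shift: "ujsc_weights (\<lambda>k. E (s + k)) (\<lambda>k. a (s + k)) \<gamma> S"
proof
  show "weight_rules (\<lambda>k. E (s + k)) (\<lambda>k. a (s + k)) \<gamma>"
    using weights unfolding weight_rules_def by blast
  show "0 < S" by (rule S_pos)
  fix t
  have "(\<lambda>k. E (s + k)) ` {t..<t+S} = E ` {t+s..<t+s+S}"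
  proof (intro subset_antisym subsetI)
    fix x assume "x \<in> E ` {t+s..<t+s+S}"
    then obtain k where "k \<in> {t+s..<t+s+S}" "x = E k" by blast
    then have "x = E (s + (k - s))" "k - s \<in> {t..<t+S}" by auto
    then show "x \<in> (\<lambda>k. E (s + k)) ` {t..<t+S}" by blast
  qed auto
  then show "strongly_connected (\<Union>k\<in>{t..<t+S}. E (s + k))"
    using connected[of "t + s"] by simp
qed

context
  fixes z e :: "nat \<Rightarrow> 'm \<Rightarrow> real" and err_bound :: "nat \<Rightarrow> real"
  assumes recursion: "\<And>s i. z (Suc s) i = (\<Sum>j\<in>UNIV. a s i j * z s j) + e s i"
    and err: "\<And>s i. \<bar>e s i\<bar> \<le> err_bound s"
begin

lemma perturbed_lower: "vmin (z t) - (\<Sum>r\<in>{t..<t+n}. err_bound r) \<le> z (t + n) i"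
proof (induction n arbitrary: i)
  case 0
  then show ?case by (simp add: vmin_le)
next
  case (Suc n)
  have "vmin (z t) - (\<Sum>r\<in>{t..<t+n}. err_bound r) \<le> (\<Sum>j\<in>UNIV. a (t+n) i j * z (t+n) j)"
    by (rule convex_comb_ge_bound) (auto simp: weight_nonneg weight_row_sum Suc.IH)
  then show ?case using recursion[of "t+n" i] err[of "t+n" i] by simp
qed

lemma perturbed_window_lower:
  "vmin (z t) + \<gamma> ^ (CARD('m) * S) * (z t k - vmin (z t)) - (\<Sum>r\<in>{t..<t + CARD('m) * S}. err_bound r) \<le> z (t + CARD('m) * S) i"
proof -
  define c where "c = vmin (z t)"
  define d where "d = z t k - c"
  define B where "B n = (\<Sum>r\<in>{t..<t+n}. err_bound r)" for n
  define R where "R n = {i. c + \<gamma> ^ n * d - B n \<le> z (t+n) i}" for n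
  have d: "0 \<le> d" unfolding d_def c_def by (simp add: vmin_le)
  have low: "c - B n \<le> z (t+n) l" for n l
    using perturbed_lower unfolding c_def B_def by blast
  \<comment> \<open>Agents that are high at time \<open>n\<close> pull their out-neighbours up, losing only a factor \<open>\<gamma>\<close>.\<close>
  have grow: "i \<in> R (Suc n)" if "j \<in> R n" "\<gamma> \<le> a (t+n) i j" for i j n
  proof -
    have "(c - B n) + a (t+n) i j * (z (t+n) j - (c - B n)) \<le> (\<Sum>l\<in>UNIV. a (t+n) i l * z (t+n) l)"
      by (rule convex_comb_ge) (auto simp: weight_nonneg weight_row_sum low)
    moreover have "\<gamma> * (\<gamma> ^ n * d) \<le> a (t+n) i j * (z (t+n) j - (c - B n))"
      using that gamma_pos d unfolding R_def by (intro mult_mono) auto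
    ultimately show ?thesis
      using recursion[of "t+n" i] err[of "t+n" i] unfolding R_def B_def by simp
  qed
  have "R n \<subseteq> R (Suc n)" for n
    using grow weight_diag_ge by blast
  then have mono: "R n \<subseteq> R (n + q)" for n q
    by (induction q) auto
  have k: "k \<in> R n" for n
    using mono[of 0 n] unfolding R_def B_def d_def by auto
  have strict: "R n \<subset> R (n + S)" if not_all: "R n \<noteq> UNIV" for n
  proof -
    obtain i where i: "i \<notin> R n" using not_all by blast
    have "(k, i) \<in> (\<Union>s\<in>{t+n..<t+n+S}. E s)\<^sup>*"
      using connected[of "t+n"] unfolding strongly_connected_def by blast
    then obtain p q s where pq: "(p, q) \<in> E s" "s \<in> {t+n..<t+n+S}" "p \<in> R n" "q \<notin> R n"
      using rtrancl_leaves_set[of k i _ "R n"] k i by blast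
    then have "p \<in> R (s - t)" using mono[of n "s - t - n"] by auto
    then have "q \<in> R (Suc (s - t))"
      using grow[of p "s - t" q] weight_edge_ge[OF pq(1)] pq(2) by auto
    then have "q \<in> R (n + S)" using mono[of "Suc (s - t)" "n + S - Suc (s - t)"] pq(2) by auto
    then show ?thesis using mono[of n S] pq(4) by blast
  qed
  have start: "R 0 \<noteq> {}" using k[of 0] by blast
  have "R (CARD('m) * S) = UNIV"
    using growing_sets_cover[of R S, OF mono _ start] strict by blast
  then have "i \<in> R (CARD('m) * S)" by simp
  then show ?thesis unfolding R_def c_def d_def B_def by (simp only: mem_Collect_eq)
qed

end

lemma perturbed_spread_window:
  fixes z e :: "nat \<Rightarrow> 'm \<Rightarrow> real" and err_bound :: "nat \<Rightarrow> real"
  assumes recursion: "\<And>s i. z (Suc s) i = (\<Sum>j\<in>UNIV. a s i j * z s j) + e s i"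
    and err: "\<And>s i. \<bar>e s i\<bar> \<le> err_bound s"
  shows "spread (z (t + CARD('m) * S))
           \<le> (1 - \<gamma> ^ (CARD('m) * S)) * spread (z t) + 2 * (\<Sum>r\<in>{t..<t + CARD('m) * S}. err_bound r)"
    and "spread (z (t + n)) \<le> spread (z t) + 2 * (\<Sum>r\<in>{t..<t+n}. err_bound r)"
proof -
  obtain k :: 'm where True by blast
  have recursion': "\<And>s i. - z (Suc s) i = (\<Sum>j\<in>UNIV. a s i j * - z s j) + - e s i"
    by (simp add: recursion sum_negf)
  have err': "\<And>s i. \<bar>- e s i\<bar> \<le> err_bound s" using err by simp
  define L where "L = CARD('m) * S"
  define B where "B n = (\<Sum>r\<in>{t..<t+n}. err_bound r)" for n
  have lo: "vmin (z t) + \<gamma> ^ L * (z t k - vmin (z t)) - B L \<le> z (t + L) i" for i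
    using perturbed_window_lower[OF recursion err] unfolding L_def B_def .
  have hi: "- vmax (z t) + \<gamma> ^ L * (vmax (z t) - z t k) - B L \<le> - z (t + L) i" for i
    using perturbed_window_lower[OF recursion' err', of t k i] unfolding L_def B_def vmin_uminus
    by (simp add: algebra_simps)
  have "vmax (z (t + L)) \<le> vmax (z t) - \<gamma> ^ L * (vmax (z t) - z t k) + B L"
    by (rule vmax_least) (use hi in \<open>simp add: algebra_simps\<close>)
  moreover have "vmin (z t) + \<gamma> ^ L * (z t k - vmin (z t)) - B L \<le> vmin (z (t + L))"
    by (rule vmin_greatest) (rule lo)
  ultimately have "spread (z (t + L)) \<le> (1 - \<gamma> ^ L) * spread (z t) + 2 * B L"
    unfolding spread_def by (simp add: algebra_simps)
  then show "spread (z (t + CARD('m) * S))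
           \<le> (1 - \<gamma> ^ (CARD('m) * S)) * spread (z t) + 2 * (\<Sum>r\<in>{t..<t + CARD('m) * S}. err_bound r)"
    unfolding L_def B_def .
  have "- vmax (z t) - B n \<le> - z (t + n) i" for i
    using perturbed_lower[OF recursion' err', of t n i] unfolding vmin_uminus B_def .
  then have "vmax (z (t + n)) \<le> vmax (z t) + B n"
    by (intro vmax_least) (simp add: algebra_simps)
  moreover have "vmin (z t) - B n \<le> vmin (z (t + n))"
    using perturbed_lower[OF recursion err, of t n] unfolding B_def by (intro vmin_greatest)
  ultimately show "spread (z (t + n)) \<le> spread (z t) + 2 * (\<Sum>r\<in>{t..<t+n}. err_bound r)"
    unfolding spread_def B_def by simp
qed

end

section \<open>Absolute probability sequences\<close>

primrec consensus_iter ::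
  "(nat \<Rightarrow> 'm \<Rightarrow> 'm \<Rightarrow> real) \<Rightarrow> nat \<Rightarrow> ('m::finite \<Rightarrow> real) \<Rightarrow> nat \<Rightarrow> 'm \<Rightarrow> real" where
  "consensus_iter a s z 0 = z"
| "consensus_iter a s z (Suc k) = (\<lambda>i. \<Sum>j\<in>UNIV. a (s + k) i j * consensus_iter a s z k j)"

lemma consensus_iter_linear:
  "consensus_iter a s (\<lambda>i. \<Sum>l\<in>UNIV. c l * z l i) k i = (\<Sum>l\<in>UNIV. c l * consensus_iter a s (z l) k i)"
proof (induction k arbitrary: i)
  case (Suc k)
  have "(\<Sum>j\<in>UNIV. a (s + k) i j * (\<Sum>l\<in>UNIV. c l * consensus_iter a s (z l) k j))
      = (\<Sum>l\<in>UNIV. c l * (\<Sum>j\<in>UNIV. a (s + k) i j * consensus_iter a s (z l) k j))"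
    unfolding sum_distrib_left by (subst sum.swap) (simp add: mult_ac)
  then show ?case by (simp add: Suc.IH)
qed simp

lemma consensus_iter_Suc_start:
  "consensus_iter a s z (Suc k) = consensus_iter a (Suc s) (\<lambda>i. \<Sum>j\<in>UNIV. a s i j * z j) k"
  by (induction k) simp_all

lemma common_limit_if_spread_vanishes:
  fixes y :: "nat \<Rightarrow> 'm::finite \<Rightarrow> real"
  assumes between: "\<And>k n i. vmin (y k) \<le> y (k + n) i \<and> y (k + n) i \<le> vmax (y k)"
    and spread: "(\<lambda>k. spread (y k)) \<longlonglongrightarrow> 0"
  shows "\<exists>l. \<forall>i. (\<lambda>k. y k i) \<longlonglongrightarrow> l"
proof -
  have "antimono (\<lambda>k. vmax (y k))"
  proof (rule antimonoI)
    fix k k' :: nat assume "k \<le> k'"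
    then obtain n where "k' = k + n" using le_Suc_ex by blast
    then show "vmax (y k') \<le> vmax (y k)" using between by (auto intro: vmax_least)
  qed
  moreover have "\<forall>k. vmin (y 0) \<le> vmax (y k)"
    using between[of 0] vmax_ge order_trans by (metis add_0)
  ultimately obtain l where l: "(\<lambda>k. vmax (y k)) \<longlonglongrightarrow> l"
    using decseq_convergent by blast
  have "(\<lambda>k. vmax (y k) - spread (y k)) \<longlonglongrightarrow> l - 0"
    by (intro tendsto_diff l spread)
  then have "(\<lambda>k. vmin (y k)) \<longlonglongrightarrow> l" by (simp add: spread_def)
  then have "(\<lambda>k. y k i) \<longlonglongrightarrow> l" for i
    by (rule tendsto_sandwich[rotated 2, OF _ l]) (auto simp: vmin_le vmax_ge)
  then show ?thesis by blast
qed

context ujsc_weights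
begin

lemma consensus_iter_between:
  "vmin (consensus_iter a s z k) \<le> consensus_iter a s z (k + n) i
   \<and> consensus_iter a s z (k + n) i \<le> vmax (consensus_iter a s z k)"
proof -
  interpret shifted: ujsc_weights "\<lambda>k. E (s + k)" "\<lambda>k. a (s + k)" \<gamma> S by (rule shift)
  have "\<And>k i. consensus_iter a s z (Suc k) i = (\<Sum>j\<in>UNIV. a (s + k) i j * consensus_iter a s z k j) + 0"
    "\<And>k i. - consensus_iter a s z (Suc k) i
       = (\<Sum>j\<in>UNIV. a (s + k) i j * - consensus_iter a s z k j) + 0"
    by (simp_all add: sum_negf)
  from this[THEN shifted.perturbed_lower, of "\<lambda>_. 0"]
  show ?thesis by (simp add: vmin_uminus)
qed

lemma consensus_iter_spread_window:
  "spread (consensus_iter a s z (k + CARD('m) * S))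
   \<le> (1 - \<gamma> ^ (CARD('m) * S)) * spread (consensus_iter a s z k)"
proof -
  interpret shifted: ujsc_weights "\<lambda>k. E (s + k)" "\<lambda>k. a (s + k)" \<gamma> S by (rule shift)
  have "\<And>k i. consensus_iter a s z (Suc k) i = (\<Sum>j\<in>UNIV. a (s + k) i j * consensus_iter a s z k j) + 0"
    by simp
  from shifted.perturbed_spread_window(1)[OF this, of "\<lambda>_. 0"] show ?thesis by simp
qed

lemma consensus_iter_window_lower:
  "vmin z + \<gamma> ^ (CARD('m) * S) * (z j - vmin z) \<le> consensus_iter a s z (CARD('m) * S) i"
proof -
  interpret shifted: ujsc_weights "\<lambda>k. E (s + k)" "\<lambda>k. a (s + k)" \<gamma> S by (rule shift)
  have "\<And>k i. consensus_iter a s z (Suc k) i = (\<Sum>j\<in>UNIV. a (s + k) i j * consensus_iter a s z k j) + 0"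
    by simp
  from shifted.perturbed_window_lower[OF this, of "\<lambda>_. 0" 0 j i] show ?thesis by simp
qed

lemma consensus_iter_converges: "\<exists>l. \<forall>i. (\<lambda>k. consensus_iter a s z k i) \<longlonglongrightarrow> l"
proof (rule common_limit_if_spread_vanishes[OF consensus_iter_between])
  define sp where "sp k = spread (consensus_iter a s z k)" for k
  define \<beta> where "\<beta> = 1 - \<gamma> ^ (CARD('m) * S)"
  have "antimono sp"
  proof (rule antimonoI)
    fix k k' :: nat assume "k \<le> k'"
    then obtain n where k': "k' = k + n" using le_Suc_ex by blast
    have "vmax (consensus_iter a s z k') \<le> vmax (consensus_iter a s z k)"
      using consensus_iter_between[of s z k n] k' by (auto intro: vmax_least)
    moreover have "vmin (consensus_iter a s z k) \<le> vmin (consensus_iter a s z k')"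
      using consensus_iter_between[of s z k n] k' by (auto intro: vmin_greatest)
    ultimately show "sp k' \<le> sp k" unfolding sp_def spread_def by simp
  qed
  then obtain l where l: "sp \<longlonglongrightarrow> l"
    using decseq_convergent[of sp 0] spread_nonneg unfolding sp_def by blast
  have "(\<lambda>k. sp (k + CARD('m) * S)) \<longlonglongrightarrow> l" by (rule LIMSEQ_ignore_initial_segment[OF l])
  moreover have "(\<lambda>k. \<beta> * sp k) \<longlonglongrightarrow> \<beta> * l" by (intro tendsto_mult_left l)
  ultimately have "l \<le> \<beta> * l"
    by (rule LIMSEQ_le) (use consensus_iter_spread_window in \<open>auto simp: sp_def \<beta>_def\<close>)
  then have "\<gamma> ^ (CARD('m) * S) * l \<le> 0" unfolding \<beta>_def by (simp add: algebra_simps)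
  moreover have "0 < \<gamma> ^ (CARD('m) * S)" using gamma_pos by simp
  ultimately have "l \<le> 0" using mult_le_cancel_left_pos[of "\<gamma> ^ (CARD('m) * S)" l 0] by simp
  moreover have "0 \<le> l" by (rule LIMSEQ_le_const[OF l]) (simp add: sp_def spread_nonneg)
  ultimately have "l = 0" by simp
  then show "(\<lambda>k. spread (consensus_iter a s z k)) \<longlonglongrightarrow> 0" using l unfolding sp_def by simp
qed

text \<open>All components of the backward products \<open>A(s+k-1)\<cdots>A(s) e\<^sub>j\<close> converge to the same
  limit (\<open>consensus_iter_converges\<close>), so the component \<open>undefined\<close> is as good as any.\<close>

definition absolute_prob :: "nat \<Rightarrow> 'm \<Rightarrow> real" where
  "absolute_prob s j = lim (\<lambda>k. consensus_iter a s (\<lambda>i. of_bool (i = j)) k undefined)"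

lemma absolute_prob_tendsto:
  "(\<lambda>k. consensus_iter a s (\<lambda>i. of_bool (i = j)) k i) \<longlonglongrightarrow> absolute_prob s j"
proof -
  obtain l where l: "\<forall>i. (\<lambda>k. consensus_iter a s (\<lambda>i. of_bool (i = j)) k i) \<longlonglongrightarrow> l"
    using consensus_iter_converges by blast
  then have "absolute_prob s j = l" unfolding absolute_prob_def by (simp add: limI)
  then show ?thesis using l by simp
qed

lemma absolute_prob_sum: "(\<Sum>j\<in>UNIV. absolute_prob s j) = 1"
proof -
  obtain i :: 'm where True by blast
  have "consensus_iter a s (\<lambda>_. 1) k i = 1" for k
    by (induction k arbitrary: i) (simp_all add: weight_row_sum sum_distrib_left[symmetric])
  then have "(\<Sum>j\<in>UNIV. consensus_iter a s (\<lambda>i. of_bool (i = j)) k i) = 1" for k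
    using consensus_iter_linear[of a s "\<lambda>_. 1" "\<lambda>j i. of_bool (i = j)" k i] by simp
  moreover have "(\<lambda>k. \<Sum>j\<in>UNIV. consensus_iter a s (\<lambda>i. of_bool (i = j)) k i)
      \<longlonglongrightarrow> (\<Sum>j\<in>UNIV. absolute_prob s j)"
    by (intro tendsto_sum absolute_prob_tendsto)
  ultimately have "(\<lambda>k. 1) \<longlonglongrightarrow> (\<Sum>j\<in>UNIV. absolute_prob s j)" by simp
  from LIMSEQ_unique[OF tendsto_const this] show ?thesis by simp
qed

lemma absolute_prob_lower: "\<gamma> ^ (CARD('m) * S) \<le> absolute_prob s j"
proof (rule LIMSEQ_le_const[OF absolute_prob_tendsto[of s j undefined]])
  let ?e = "\<lambda>i::'m. of_bool (i = j) :: real"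
  let ?p = "\<gamma> ^ (CARD('m) * S)"
  have "0 \<le> vmin ?e" "vmin ?e \<le> 1" "?p \<le> 1"
    using vmin_greatest[of 0 ?e] vmin_le[of ?e j] gamma_pos gamma_less_1 by (auto simp: power_le_one)
  then have "0 \<le> vmin ?e * (1 - ?p)" by simp
  moreover have "vmin ?e + ?p * (?e j - vmin ?e) = ?p + vmin ?e * (1 - ?p)"
    by (simp add: algebra_simps)
  ultimately have "?p \<le> vmin ?e + ?p * (?e j - vmin ?e)" by linarith
  then have "?p \<le> consensus_iter a s ?e (CARD('m) * S) i" for i
    using consensus_iter_window_lower[of ?e j s i] by linarith
  then have window: "?p \<le> vmin (consensus_iter a s ?e (CARD('m) * S))" by (rule vmin_greatest)
  show "\<exists>N. \<forall>n\<ge>N. ?p \<le> consensus_iter a s ?e n undefined"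
  proof (intro exI allI impI)
    fix n assume "CARD('m) * S \<le> n"
    then obtain d where "n = CARD('m) * S + d" using le_Suc_ex by blast
    then show "?p \<le> consensus_iter a s ?e n undefined"
      using consensus_iter_between[of s ?e "CARD('m) * S" d undefined] window by simp
  qed
qed

lemma absolute_prob_nonneg: "0 \<le> absolute_prob s j"
  using absolute_prob_lower[of s j] gamma_pos by (smt (verit) zero_le_power)

lemma absolute_prob_Suc: "absolute_prob s j = (\<Sum>l\<in>UNIV. a s l j * absolute_prob (Suc s) l)"
proof -
  obtain i :: 'm where True by blast
  have "consensus_iter a s (\<lambda>i. of_bool (i = j)) (Suc k) i
      = (\<Sum>l\<in>UNIV. a s l j * consensus_iter a (Suc s) (\<lambda>i. of_bool (i = l)) k i)" for k
  proof -
    have "consensus_iter a s (\<lambda>i. of_bool (i = j)) (Suc k) i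
        = consensus_iter a (Suc s) (\<lambda>i. \<Sum>l\<in>UNIV. a s l j * of_bool (i = l)) k i"
      unfolding consensus_iter_Suc_start by simp
    also have "\<dots> = (\<Sum>l\<in>UNIV. a s l j * consensus_iter a (Suc s) (\<lambda>i. of_bool (i = l)) k i)"
      by (rule consensus_iter_linear)
    finally show ?thesis .
  qed
  then have "(\<lambda>k. consensus_iter a s (\<lambda>i. of_bool (i = j)) (Suc k) i)
      \<longlonglongrightarrow> (\<Sum>l\<in>UNIV. a s l j * absolute_prob (Suc s) l)"
    by (simp only:) (intro tendsto_sum tendsto_mult_left absolute_prob_tendsto)
  with LIMSEQ_Suc[OF absolute_prob_tendsto] show ?thesis by (rule LIMSEQ_unique)
qed

lemma absolute_prob_reweight:
  "(\<Sum>i\<in>UNIV. absolute_prob (Suc t) i * (\<Sum>j\<in>UNIV. a t i j * Z j)) = (\<Sum>j\<in>UNIV. absolute_prob t j * Z j)"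
proof -
  have "(\<Sum>i\<in>UNIV. absolute_prob (Suc t) i * (\<Sum>j\<in>UNIV. a t i j * Z j))
      = (\<Sum>j\<in>UNIV. (\<Sum>i\<in>UNIV. a t i j * absolute_prob (Suc t) i) * Z j)"
    by (simp add: sum_distrib_left sum_distrib_right mult_ac) (rule sum.swap)
  then show ?thesis by (simp add: absolute_prob_Suc[symmetric])
qed

end

section \<open>Discounted sums\<close>

lemma geometric_sum_le:
  fixes \<rho> :: real
  assumes "0 \<le> \<rho>" "\<rho> < 1" "finite A" "\<And>t. t \<in> A \<Longrightarrow> s \<le> t"
  shows "(\<Sum>t\<in>A. \<rho> ^ (t - s)) \<le> 1 / (1 - \<rho>)"
proof -
  have "inj_on (\<lambda>t. t - s) A"
    using assms(4) by (intro inj_onI) (metis le_add_diff_inverse)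
  then have "(\<Sum>t\<in>A. \<rho> ^ (t - s)) = (\<Sum>k\<in>(\<lambda>t. t - s) ` A. \<rho> ^ k)"
    by (simp add: sum.reindex o_def)
  also have "\<dots> \<le> (\<Sum>k. \<rho> ^ k)"
    by (rule sum_le_suminf) (use assms in \<open>auto intro: summable_geometric\<close>)
  also have "\<dots> = 1 / (1 - \<rho>)" by (rule suminf_geometric) (use assms in auto)
  finally show ?thesis .
qed

lemma window_recursion_unroll:
  fixes sp bb :: "nat \<Rightarrow> real" and L :: nat and \<beta> \<rho> :: real
  assumes L: "0 < L" and \<beta>: "0 < \<beta>" and \<rho>: "\<rho> ^ L = \<beta>" "0 < \<rho>" "\<rho> \<le> 1"
    and bb: "\<And>s. 0 \<le> bb s" and sp0: "0 \<le> sp t0"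
    and grow: "\<And>t n. t0 \<le> t \<Longrightarrow> sp (t + n) \<le> sp t + 2 * (\<Sum>r\<in>{t..<t+n}. bb r)"
    and window: "\<And>t. t0 \<le> t \<Longrightarrow> sp (t + L) \<le> \<beta> * sp t + 2 * (\<Sum>r\<in>{t..<t+L}. bb r)"
  shows "t0 \<le> t \<Longrightarrow> sp t \<le> (\<rho> ^ (t - t0) * sp t0 + 2 * (\<Sum>s\<in>{t0..<t}. \<rho> ^ (t - 1 - s) * bb s)) / \<beta>"
proof (induction t rule: less_induct)
  case (less t)
  have \<beta>_le: "\<beta> \<le> \<rho> ^ k" if "k \<le> L" for k
    using power_decreasing[OF that, of \<rho>] \<rho> by simp
  have bb_le: "bb s \<le> \<rho> ^ (t - 1 - s) * bb s / \<beta>" if "t - 1 - s \<le> L" for s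
    using mult_right_mono[OF \<beta>_le[OF that] bb[of s]] \<beta> by (simp add: field_simps)
  have split: "(\<rho> ^ (t - t0) * sp t0 + 2 * (\<Sum>s\<in>{t0..<t}. \<rho> ^ (t - 1 - s) * bb s)) / \<beta>
      = \<rho> ^ (t - t0) * sp t0 / \<beta> + 2 * (\<Sum>s\<in>{t0..<t}. \<rho> ^ (t - 1 - s) * bb s / \<beta>)"
    by (simp only: add_divide_distrib times_divide_eq_right[symmetric] sum_divide_distrib)
  show ?case
  proof (cases "t < t0 + L")
    case True
    have "sp t \<le> sp t0 + 2 * (\<Sum>r\<in>{t0..<t}. bb r)"
      using grow[of t0 "t - t0"] less.prems by simp
    also have "sp t0 \<le> \<rho> ^ (t - t0) * sp t0 / \<beta>"
      using mult_right_mono[OF \<beta>_le[of "t - t0"] sp0] True \<beta> by (simp add: field_simps)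
    also have "(\<Sum>r\<in>{t0..<t}. bb r) \<le> (\<Sum>r\<in>{t0..<t}. \<rho> ^ (t - 1 - r) * bb r / \<beta>)"
      by (rule sum_mono) (use bb_le True in auto)
    finally show ?thesis unfolding split by linarith
  next
    case False
    define t' where "t' = t - L"
    have t': "t = t' + L" "t0 \<le> t'" "t' < t" using False L unfolding t'_def by auto
    have \<rho>_shift: "\<rho> ^ (t - 1 - s) = \<rho> ^ (t' - 1 - s) * \<beta>" if "s < t'" for s
    proof -
      have "t - 1 - s = (t' - 1 - s) + L" using that t' by simp
      then show ?thesis using \<rho>(1) by (simp add: power_add)
    qed
    have "sp t \<le> \<beta> * sp t' + 2 * (\<Sum>r\<in>{t'..<t}. bb r)" using window[OF t'(2)] t' by simp
    also have "\<beta> * sp t' \<le> \<rho> ^ (t' - t0) * sp t0 + 2 * (\<Sum>s\<in>{t0..<t'}. \<rho> ^ (t' - 1 - s) * bb s)"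
      using less.IH[OF t'(3) t'(2)] \<beta> by (simp add: field_simps)
    also have "\<rho> ^ (t' - t0) * sp t0 = \<rho> ^ (t - t0) * sp t0 / \<beta>"
    proof -
      have "\<rho> ^ (t - t0) = \<rho> ^ (t' - t0) * \<beta>"
        using t' \<rho>(1) by (metis add.commute add_diff_assoc2 power_add)
      then show ?thesis using \<beta> by simp
    qed
    also have "(\<Sum>s\<in>{t0..<t'}. \<rho> ^ (t' - 1 - s) * bb s) = (\<Sum>s\<in>{t0..<t'}. \<rho> ^ (t - 1 - s) * bb s / \<beta>)"
      by (rule sum.cong) (use \<rho>_shift \<beta> in auto)
    also have "(\<Sum>r\<in>{t'..<t}. bb r) \<le> (\<Sum>r\<in>{t'..<t}. \<rho> ^ (t - 1 - r) * bb r / \<beta>)"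
      by (rule sum_mono) (use bb_le t' in auto)
    finally have "sp t \<le> \<rho> ^ (t - t0) * sp t0 / \<beta> + 2 * ((\<Sum>s\<in>{t0..<t'}. \<rho> ^ (t - 1 - s) * bb s / \<beta>)
        + (\<Sum>r\<in>{t'..<t}. \<rho> ^ (t - 1 - r) * bb r / \<beta>))" by simp
    also have "(\<Sum>s\<in>{t0..<t'}. \<rho> ^ (t - 1 - s) * bb s / \<beta>) + (\<Sum>r\<in>{t'..<t}. \<rho> ^ (t - 1 - r) * bb r / \<beta>)
        = (\<Sum>s\<in>{t0..<t}. \<rho> ^ (t - 1 - s) * bb s / \<beta>)"
      by (rule sum.atLeastLessThan_concat) (use t' in auto)
    finally show ?thesis unfolding split by linarith
  qed
qed

lemma weighted_discounted_sum_le: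
  fixes \<alpha> bb :: "nat \<Rightarrow> real" and \<rho> :: real
  assumes \<rho>: "0 \<le> \<rho>" "\<rho> < 1" and bb: "\<And>s. 0 \<le> bb s"
    and \<alpha>: "\<And>t. 0 \<le> \<alpha> t" "\<And>s t. s \<le> t \<Longrightarrow> \<alpha> t \<le> \<alpha> s"
  shows "(\<Sum>t\<in>{t0..T}. \<alpha> t * (\<Sum>s\<in>{t0..<t}. \<rho> ^ (t - 1 - s) * bb s))
    \<le> (\<Sum>s\<in>{t0..T}. \<alpha> s * bb s) / (1 - \<rho>)"
proof -
  have "(\<Sum>t\<in>{t0..T}. \<alpha> t * (\<Sum>s\<in>{t0..<t}. \<rho> ^ (t - 1 - s) * bb s))
      = (\<Sum>t\<in>{t0..T}. \<Sum>s | s \<in> {t0..T} \<and> s < t. \<alpha> t * (\<rho> ^ (t - 1 - s) * bb s))"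
    by (rule sum.cong) (auto simp: sum_distrib_left intro!: sum.cong)
  also have "\<dots> = (\<Sum>s\<in>{t0..T}. \<Sum>t | t \<in> {t0..T} \<and> s < t. \<alpha> t * (\<rho> ^ (t - 1 - s) * bb s))"
    by (rule sum.swap_restrict) auto
  also have "\<dots> \<le> (\<Sum>s\<in>{t0..T}. \<alpha> s * bb s * (1 / (1 - \<rho>)))"
  proof (rule sum_mono)
    fix s
    have "(\<Sum>t | t \<in> {t0..T} \<and> s < t. \<alpha> t * (\<rho> ^ (t - 1 - s) * bb s))
        \<le> (\<Sum>t | t \<in> {t0..T} \<and> s < t. \<alpha> s * bb s * \<rho> ^ (t - Suc s))"
      by (rule sum_mono) (use \<alpha>(2)[of s] \<rho> bb in \<open>auto simp: mult_ac intro!: mult_right_mono\<close>)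
    also have "\<dots> \<le> \<alpha> s * bb s * (1 / (1 - \<rho>))"
      unfolding sum_distrib_left[symmetric]
      by (intro mult_left_mono geometric_sum_le) (use \<rho> \<alpha>(1)[of s] bb[of s] in auto)
    finally show "(\<Sum>t | t \<in> {t0..T} \<and> s < t. \<alpha> t * (\<rho> ^ (t - 1 - s) * bb s))
        \<le> \<alpha> s * bb s * (1 / (1 - \<rho>))" .
  qed
  also have "\<dots> = (\<Sum>s\<in>{t0..T}. \<alpha> s * bb s) / (1 - \<rho>)" by (simp add: sum_divide_distrib)
  finally show ?thesis .
qed

lemma weighted_unrolled_sum_le:
  fixes sp bb \<alpha> :: "nat \<Rightarrow> real" and \<beta> \<rho> :: real
  assumes \<beta>: "0 < \<beta>" and \<rho>: "0 \<le> \<rho>" "\<rho> < 1"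
    and bb: "\<And>s. 0 \<le> bb s" and sp0: "0 \<le> sp t0"
    and \<alpha>: "\<And>t. 0 \<le> \<alpha> t" "\<And>s t. s \<le> t \<Longrightarrow> \<alpha> t \<le> \<alpha> s"
    and sp: "\<And>t. t0 \<le> t \<Longrightarrow> sp t \<le> (\<rho> ^ (t - t0) * sp t0 + 2 * (\<Sum>s\<in>{t0..<t}. \<rho> ^ (t - 1 - s) * bb s)) / \<beta>"
  shows "(\<Sum>t\<in>{t0..T}. \<alpha> t * sp t)
    \<le> (\<alpha> t0 * sp t0 / (1 - \<rho>) + 2 / (1 - \<rho>) * (\<Sum>s\<in>{t0..T}. \<alpha> s * bb s)) / \<beta>"
proof -
  define G where "G = (\<Sum>t\<in>{t0..T}. \<alpha> t * \<rho> ^ (t - t0))"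
  define C where "C = (\<Sum>t\<in>{t0..T}. \<alpha> t * (\<Sum>s\<in>{t0..<t}. \<rho> ^ (t - 1 - s) * bb s))"
  have "(\<Sum>t\<in>{t0..T}. \<alpha> t * sp t)
      \<le> (\<Sum>t\<in>{t0..T}. \<alpha> t * ((\<rho> ^ (t - t0) * sp t0 + 2 * (\<Sum>s\<in>{t0..<t}. \<rho> ^ (t - 1 - s) * bb s)) / \<beta>))"
    by (intro sum_mono mult_left_mono sp \<alpha>) auto
  also have "\<dots> = (G * sp t0 + 2 * C) / \<beta>"
    unfolding G_def C_def
    by (simp add: add_divide_distrib sum_divide_distrib sum.distrib sum_distrib_left sum_distrib_right
        algebra_simps)
  also have "\<dots> \<le> (\<alpha> t0 / (1 - \<rho>) * sp t0 + 2 * ((\<Sum>s\<in>{t0..T}. \<alpha> s * bb s) / (1 - \<rho>))) / \<beta>"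
  proof (intro divide_right_mono add_mono mult_right_mono mult_left_mono)
    have "G \<le> (\<Sum>t\<in>{t0..T}. \<alpha> t0 * \<rho> ^ (t - t0))"
      unfolding G_def by (intro sum_mono mult_right_mono) (use \<alpha>(2) \<rho> in auto)
    also have "\<dots> \<le> \<alpha> t0 * (1 / (1 - \<rho>))"
      unfolding sum_distrib_left[symmetric]
      by (intro mult_left_mono geometric_sum_le) (use \<rho> \<alpha>(1) in auto)
    finally show "G \<le> \<alpha> t0 / (1 - \<rho>)" by simp
    show "C \<le> (\<Sum>s\<in>{t0..T}. \<alpha> s * bb s) / (1 - \<rho>)"
      unfolding C_def by (rule weighted_discounted_sum_le[OF \<rho> bb \<alpha>])
  qed (use sp0 \<beta> in auto)
  finally show ?thesis by (simp add: algebra_simps)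
qed

section \<open>The epigraphic problem\<close>

lemma f0_eq_mean: "f0 (\<theta> :: (real^'n) \<times> (real^'m::finite)) = (\<Sum>j\<in>UNIV. snd \<theta> $ j) / real CARD('m)"
  by (cases \<theta>) (simp add: f0_def cvec_def inner_Pair inner_vec_def sum_divide_distrib)

locale epigraph_problem =
  fixes X :: "(real^'n) set"
    and f :: "'m::finite \<Rightarrow> real^'n \<Rightarrow> real"
    and g :: "'m \<Rightarrow> real^'n \<Rightarrow> real \<Rightarrow> real"
    and Y Yk :: "'m \<Rightarrow> real set"
    and eps :: "'m \<Rightarrow> real"
  assumes X: "compact X" "convex X"
    and f_convex: "\<And>i. convex_on UNIV (f i)"
    and g_convex: "\<And>i y. y \<in> Y i \<Longrightarrow> convex_on UNIV (\<lambda>x. g i x y)"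
    and Yk: "\<And>i. finite (Yk i)" "\<And>i. Yk i \<subseteq> Y i"
    and interior: "\<exists>x\<in>X. \<forall>i. \<forall>y\<in>Yk i. g i x y < - eps i"
begin

abbreviation "Om i \<equiv> Omega_i X f g Yk eps i"
abbreviation "Om_all \<equiv> Omega X f g Yk eps"
abbreviation "opt \<equiv> f0star X f g Yk eps"

definition feasible_x :: "(real^'n) set" where
  "feasible_x = {x\<in>X. \<forall>j. \<forall>y\<in>Yk j. g j x y \<le> - eps j}"

lemma f_continuous: "continuous_on UNIV (f i)"
  by (rule convex_on_continuous[OF open_UNIV f_convex])

lemma g_convex_Yk: "y \<in> Yk i \<Longrightarrow> convex_on UNIV (\<lambda>x. g i x y)"
  using g_convex Yk(2) by blast

lemma g_continuous: "y \<in> Yk i \<Longrightarrow> continuous_on UNIV (\<lambda>x. g i x y)"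
  by (rule convex_on_continuous[OF open_UNIV g_convex_Yk])

lemma Om_closed: "closed (Om i)"
proof -
  have "Om i = (X \<times> UNIV) \<inter> {\<theta>. f i (fst \<theta>) - snd \<theta> $ i \<le> 0} \<inter>
      (\<Inter>y\<in>Yk i. {\<theta>. g i (fst \<theta>) y \<le> - eps i})"
    unfolding Omega_i_def by auto
  moreover have "closed (X \<times> (UNIV :: (real^'m) set))"
    using X(1) by (simp add: closed_Times compact_imp_closed)
  moreover have "closed {\<theta> :: (real^'n) \<times> (real^'m). f i (fst \<theta>) - snd \<theta> $ i \<le> 0}"
    by (intro closed_Collect_le continuous_intros continuous_on_compose2[OF f_continuous]) auto
  moreover have "closed {\<theta> :: (real^'n) \<times> (real^'m). g i (fst \<theta>) y \<le> - eps i}" if "y \<in> Yk i" for y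
    by (intro closed_Collect_le continuous_intros continuous_on_compose2[OF g_continuous[OF that]]) auto
  ultimately show ?thesis by (auto intro!: closed_Int closed_INT)
qed

lemma Om_convex: "convex (Om i)"
proof (rule convexI)
  fix p q :: "(real^'n) \<times> (real^'m)" and u v :: real
  assume p: "p \<in> Om i" and q: "q \<in> Om i" and uv: "0 \<le> u" "0 \<le> v" "u + v = 1"
  have x: "fst (u *\<^sub>R p + v *\<^sub>R q) = u *\<^sub>R fst p + v *\<^sub>R fst q" by simp
  have "f i (fst (u *\<^sub>R p + v *\<^sub>R q)) \<le> u * f i (fst p) + v * f i (fst q)"
    unfolding x using f_convex[of i] uv unfolding convex_on_def by blast
  also have "\<dots> \<le> u * (snd p $ i) + v * (snd q $ i)"
    using p q uv unfolding Omega_i_def by (auto intro!: add_mono mult_left_mono)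
  finally have "f i (fst (u *\<^sub>R p + v *\<^sub>R q)) \<le> snd (u *\<^sub>R p + v *\<^sub>R q) $ i" by simp
  moreover have "g i (fst (u *\<^sub>R p + v *\<^sub>R q)) y \<le> - eps i" if y: "y \<in> Yk i" for y
  proof -
    have "g i (fst (u *\<^sub>R p + v *\<^sub>R q)) y \<le> u * g i (fst p) y + v * g i (fst q) y"
      unfolding x using g_convex_Yk[OF y] uv unfolding convex_on_def by blast
    also have "\<dots> \<le> u * (- eps i) + v * (- eps i)"
      using p q y uv unfolding Omega_i_def by (intro add_mono mult_left_mono) auto
    also have "\<dots> = (u + v) * (- eps i)" by (rule distrib_right[symmetric])
    finally show ?thesis using uv(3) by simp
  qed
  moreover have "fst (u *\<^sub>R p + v *\<^sub>R q) \<in> X"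
    using p q uv X(2) unfolding Omega_i_def x by (auto intro: convexD)
  ultimately show "u *\<^sub>R p + v *\<^sub>R q \<in> Om i" unfolding Omega_i_def by simp
qed

lemma feasible_x_compact: "compact feasible_x"
proof -
  have "feasible_x = X \<inter> (\<Inter>j. \<Inter>y\<in>Yk j. {x. g j x y \<le> - eps j})"
    unfolding feasible_x_def by auto
  moreover have "closed (\<Inter>j. \<Inter>y\<in>Yk j. {x. g j x y \<le> - eps j})"
    by (intro closed_INT ballI closed_Collect_le g_continuous continuous_on_const)
  ultimately show ?thesis using X(1) by (simp add: compact_Int_closed)
qed

lemma feasible_x_nonempty: "feasible_x \<noteq> {}"
  using interior unfolding feasible_x_def by (auto intro: less_imp_le)

lemma graph_in_Om_all: "x \<in> feasible_x \<Longrightarrow> (x, \<chi> j. f j x) \<in> Om_all"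
  unfolding feasible_x_def Omega_def Omega_i_def by auto

lemma Om_all_iff: "\<theta> \<in> Om_all \<longleftrightarrow> fst \<theta> \<in> feasible_x \<and> (\<forall>j. f j (fst \<theta>) \<le> snd \<theta> $ j)"
  unfolding feasible_x_def Omega_def Omega_i_def by auto

lemma Om_all_subset: "Om_all \<subseteq> Om i"
  unfolding Omega_def by auto

lemma optimum_attained: "\<exists>\<theta>\<in>Om_all. f0 \<theta> = opt"
  and opt_le: "\<theta> \<in> Om_all \<Longrightarrow> opt \<le> f0 \<theta>"
proof -
  have "continuous_on feasible_x (\<lambda>x. \<Sum>j\<in>UNIV. f j x)"
    by (intro continuous_on_sum continuous_on_subset[OF f_continuous]) auto
  then obtain xs where xs: "xs \<in> feasible_x"
    and min: "\<And>x. x \<in> feasible_x \<Longrightarrow> (\<Sum>j\<in>UNIV. f j xs) \<le> (\<Sum>j\<in>UNIV. f j x)"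
    using continuous_attains_inf[OF feasible_x_compact feasible_x_nonempty] by blast
  define \<theta>s where "\<theta>s = (xs, \<chi> j. f j xs)"
  have mem: "\<theta>s \<in> Om_all" unfolding \<theta>s_def by (rule graph_in_Om_all[OF xs])
  have le: "f0 \<theta>s \<le> f0 \<theta>" if "\<theta> \<in> Om_all" for \<theta>
  proof -
    have "(\<Sum>j\<in>UNIV. f j xs) \<le> (\<Sum>j\<in>UNIV. f j (fst \<theta>))" using min that by (simp add: Om_all_iff)
    also have "\<dots> \<le> (\<Sum>j\<in>UNIV. snd \<theta> $ j)" using that by (intro sum_mono) (simp add: Om_all_iff)
    finally show ?thesis unfolding f0_eq_mean \<theta>s_def by (simp add: divide_right_mono)
  qed
  have "opt = f0 \<theta>s" unfolding f0star_def by (rule cInf_eq_minimum) (use mem le in auto)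
  then show "\<exists>\<theta>\<in>Om_all. f0 \<theta> = opt" using mem by auto
  show "\<theta> \<in> Om_all \<Longrightarrow> opt \<le> f0 \<theta>" using le \<open>opt = f0 \<theta>s\<close> by simp
qed

lemma Om_nonempty: "Om i \<noteq> {}"
  using optimum_attained Om_all_subset by blast

lemma slater_ball:
  obtains xt \<delta> B where "xt \<in> X" "0 < \<delta>"
    "\<And>w j y. norm w \<le> \<delta> \<Longrightarrow> y \<in> Yk j \<Longrightarrow> g j (xt + w) y \<le> - eps j"
    "\<And>w j. norm w \<le> \<delta> \<Longrightarrow> f j (xt + w) \<le> B"
proof -
  obtain xt where xt: "xt \<in> X" "\<And>i y. y \<in> Yk i \<Longrightarrow> g i xt y < - eps i" using interior by blast
  define U where "U = (\<Inter>j. \<Inter>y\<in>Yk j. {x. g j x y < - eps j})"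
  have "open (\<Inter>y\<in>Yk j. {x. g j x y < - eps j})" for j
    by (intro open_INT ballI Yk(1) open_Collect_less g_continuous continuous_on_const)
  then have "open U" unfolding U_def by (intro open_INT) auto
  moreover have "xt \<in> U" unfolding U_def using xt by auto
  ultimately obtain d where d: "0 < d" "ball xt d \<subseteq> U" using open_contains_ball by blast
  define \<delta> where "\<delta> = d / 2"
  have g: "g j (xt + w) y \<le> - eps j" if "norm w \<le> \<delta>" "y \<in> Yk j" for w j y
  proof -
    have "xt + w \<in> ball xt d" using that d unfolding \<delta>_def by (simp add: dist_norm)
    then show ?thesis using d(2) that unfolding U_def by fastforce
  qed
  have "\<exists>x\<in>cball xt \<delta>. \<forall>y\<in>cball xt \<delta>. f j y \<le> f j x" for j
    by (rule continuous_attains_sup) (use d in \<open>auto simp: \<delta>_def intro: continuous_on_subset[OF f_continuous]\<close>)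
  then obtain xm where xm: "\<And>j y. y \<in> cball xt \<delta> \<Longrightarrow> f j y \<le> f j (xm j)" by metis
  have "f j (xt + w) \<le> (\<Sum>j\<in>UNIV. \<bar>f j (xm j)\<bar>)" if "norm w \<le> \<delta>" for w j
  proof -
    have "f j (xt + w) \<le> \<bar>f j (xm j)\<bar>" using xm[of "xt + w" j] that by (simp add: dist_norm)
    also have "\<dots> \<le> (\<Sum>j\<in>UNIV. \<bar>f j (xm j)\<bar>)" by (rule member_le_sum) auto
    finally show ?thesis .
  qed
  moreover have "0 < \<delta>" using d unfolding \<delta>_def by simp
  ultimately show ?thesis using that[OF xt(1)] g by blast
qed

text \<open>Why the combination below works: \<open>x'\<close> is also the convex combination
  \<open>(1 - \<tau>) x\<^sub>j + \<tau> (xt + w\<^sub>j)\<close> with \<open>x\<^sub>j\<close> the decision part of \<open>p j\<close> and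
  \<open>w\<^sub>j = (\<delta>/\<epsilon>)(fst z - x\<^sub>j)\<close> of norm at most \<open>\<delta>\<close>, because \<open>(1 - \<tau>) \<epsilon> = \<tau> \<delta>\<close>.\<close>

lemma pull_toward_slater_point:
  assumes xt: "xt \<in> X" and \<delta>: "0 < \<delta>"
    and g_ball: "\<And>w j y. norm w \<le> \<delta> \<Longrightarrow> y \<in> Yk j \<Longrightarrow> g j (xt + w) y \<le> - eps j"
    and f_ball: "\<And>w j. norm w \<le> \<delta> \<Longrightarrow> f j (xt + w) \<le> B"
    and z: "fst z \<in> X" and p: "\<And>j. p j \<in> Om j" and close: "\<And>j. norm (z - p j) \<le> \<epsilon>"
    and \<epsilon>: "0 < \<epsilon>"
  defines "\<tau> \<equiv> \<epsilon> / (\<epsilon> + \<delta>)"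
  shows "(1 - \<tau>) *\<^sub>R fst z + \<tau> *\<^sub>R xt \<in> feasible_x"
    and "f j ((1 - \<tau>) *\<^sub>R fst z + \<tau> *\<^sub>R xt) \<le> (1 - \<tau>) * (snd z $ j) + \<tau> * (B + \<delta>)"
proof -
  define x' where "x' = (1 - \<tau>) *\<^sub>R fst z + \<tau> *\<^sub>R xt"
  define w where "w j = (\<delta> / \<epsilon>) *\<^sub>R (fst z - fst (p j))" for j
  have \<tau>: "0 \<le> \<tau>" "\<tau> \<le> 1" "\<tau> * (\<delta> / \<epsilon>) = 1 - \<tau>" "(1 - \<tau>) * \<epsilon> = \<tau> * \<delta>"
    using \<epsilon> \<delta> unfolding \<tau>_def by (auto simp: field_simps)
  have x'_alt: "x' = (1 - \<tau>) *\<^sub>R fst (p j) + \<tau> *\<^sub>R (xt + w j)" for j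
  proof -
    have "\<tau> *\<^sub>R w j = (1 - \<tau>) *\<^sub>R (fst z - fst (p j))"
      unfolding w_def scaleR_scaleR \<tau>(3) ..
    then show ?thesis unfolding x'_def by (simp add: algebra_simps)
  qed
  have w: "norm (w j) \<le> \<delta>" for j
  proof -
    have "norm (fst (z - p j)) \<le> norm (z - p j)"
      using norm_fst_le[of "fst (z - p j)" "snd (z - p j)"] by (simp only: prod.collapse)
    then have "norm (fst z - fst (p j)) \<le> \<epsilon>" using close[of j] by simp
    then have "(\<delta> / \<epsilon>) * norm (fst z - fst (p j)) \<le> (\<delta> / \<epsilon>) * \<epsilon>"
      using \<epsilon> \<delta> by (intro mult_left_mono) auto
    then show ?thesis unfolding w_def using \<epsilon> \<delta> by simp
  qed
  have "g j x' y \<le> - eps j" if y: "y \<in> Yk j" for j y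
  proof -
    have "g j x' y \<le> (1 - \<tau>) * g j (fst (p j)) y + \<tau> * g j (xt + w j) y"
      unfolding x'_alt[of j] using g_convex_Yk[OF y] \<tau> unfolding convex_on_def by simp
    also have "\<dots> \<le> (1 - \<tau>) * (- eps j) + \<tau> * (- eps j)"
      using p[of j] y g_ball[OF w y] \<tau> unfolding Omega_i_def by (intro add_mono mult_left_mono) auto
    finally show ?thesis by (simp add: algebra_simps)
  qed
  moreover have "x' \<in> X" unfolding x'_def using X(2) z xt \<tau> by (auto intro: convexD_alt)
  ultimately show "x' \<in> feasible_x" unfolding feasible_x_def by auto
  have "norm (snd (p j - z)) \<le> norm (p j - z)"
    using norm_snd_le[of "snd (p j - z)" "fst (p j - z)"] by (simp only: prod.collapse)
  then have "snd (p j) $ j \<le> snd z $ j + \<epsilon>"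
    using component_le_norm_cart[of "snd (p j) - snd z" j] close[of j]
    by (simp add: norm_minus_commute)
  then have fp: "f j (fst (p j)) \<le> snd z $ j + \<epsilon>" using p[of j] unfolding Omega_i_def by auto
  have "f j x' \<le> (1 - \<tau>) * f j (fst (p j)) + \<tau> * f j (xt + w j)"
    unfolding x'_alt[of j] using f_convex[of j] \<tau> unfolding convex_on_def by simp
  also have "\<dots> \<le> (1 - \<tau>) * (snd z $ j + \<epsilon>) + \<tau> * B"
    using fp f_ball[OF w] \<tau> by (intro add_mono mult_left_mono) auto
  also have "\<dots> = (1 - \<tau>) * (snd z $ j) + \<tau> * (B + \<delta>)"
    using \<tau>(4) by (simp add: algebra_simps)
  finally show "f j x' \<le> (1 - \<tau>) * (snd z $ j) + \<tau> * (B + \<delta>)" .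
qed

lemma opt_lower_bound:
  obtains C where "0 < C"
    "\<And>z p \<epsilon>. fst z \<in> X \<Longrightarrow> (\<And>j. p j \<in> Om j) \<Longrightarrow> (\<And>j. norm (z - p j) \<le> \<epsilon>) \<Longrightarrow> opt - C * \<epsilon> \<le> f0 z"
proof -
  obtain xt \<delta> B where xt: "xt \<in> X" and \<delta>: "0 < \<delta>"
    and g_ball: "\<And>w j y. norm w \<le> \<delta> \<Longrightarrow> y \<in> Yk j \<Longrightarrow> g j (xt + w) y \<le> - eps j"
    and f_ball: "\<And>w j. norm w \<le> \<delta> \<Longrightarrow> f j (xt + w) \<le> B"
    using slater_ball by blast
  define C where "C = (\<bar>opt - B - \<delta>\<bar> + 1) / \<delta>"
  have "opt - C * \<epsilon> \<le> f0 z"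
    if z: "fst z \<in> X" and p: "\<And>j. p j \<in> Om j" and close: "\<And>j. norm (z - p j) \<le> \<epsilon>" for z p \<epsilon>
  proof (cases "\<epsilon> = 0")
    case True
    then have "z \<in> Om_all" using p close unfolding Omega_def by auto
    then show ?thesis using opt_le True by simp
  next
    case False
    then have \<epsilon>: "0 < \<epsilon>" using close[of undefined] norm_ge_zero[of "z - p undefined"] by linarith
    define \<tau> where "\<tau> = \<epsilon> / (\<epsilon> + \<delta>)"
    define x' where "x' = (1 - \<tau>) *\<^sub>R fst z + \<tau> *\<^sub>R xt"
    note pulled = pull_toward_slater_point[OF xt \<delta> g_ball f_ball z p close \<epsilon>]
    have "opt \<le> f0 (x', \<chi> j. f j x')"
      using pulled(1) unfolding x'_def \<tau>_def by (intro opt_le graph_in_Om_all)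
    also have "\<dots> \<le> (\<Sum>j\<in>UNIV. (1 - \<tau>) * (snd z $ j) + \<tau> * (B + \<delta>)) / real CARD('m)"
      unfolding f0_eq_mean using pulled(2) unfolding x'_def \<tau>_def
      by (intro divide_right_mono sum_mono) auto
    also have "\<dots> = (1 - \<tau>) * f0 z + \<tau> * (B + \<delta>)"
      by (simp add: f0_eq_mean sum.distrib sum_distrib_left[symmetric] add_divide_distrib)
    finally have gap: "\<tau> * (opt - B - \<delta>) \<le> (1 - \<tau>) * (f0 z - opt)" by (simp add: algebra_simps)
    have \<tau>_scaled: "(\<epsilon> + \<delta>) * \<tau> = \<epsilon>" "(\<epsilon> + \<delta>) * (1 - \<tau>) = \<delta>"
      using \<epsilon> \<delta> unfolding \<tau>_def by (auto simp: field_simps)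
    define x where "x = opt - B - \<delta>"
    have "\<epsilon> * x \<le> \<delta> * (f0 z - opt)"
      using mult_left_mono[OF gap, of "\<epsilon> + \<delta>"] \<epsilon> \<delta>
      unfolding mult.assoc[symmetric] \<tau>_scaled x_def by simp
    moreover have "\<epsilon> * (- \<bar>x\<bar>) \<le> \<epsilon> * x" using \<epsilon> by (intro mult_left_mono) auto
    moreover have "\<delta> * (opt - C * \<epsilon>) = \<delta> * opt - \<epsilon> * \<bar>x\<bar> - \<epsilon>"
      unfolding C_def x_def using \<delta> by (simp add: field_simps)
    ultimately have "\<delta> * (opt - C * \<epsilon>) \<le> \<delta> * f0 z" using \<epsilon> by (simp add: algebra_simps)
    then show ?thesis using \<delta> by simp
  qed
  moreover have "0 < C" unfolding C_def using \<delta> by (simp add: add_pos_nonneg)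
  ultimately show ?thesis using that by blast
qed

end

section \<open>Projected consensus steps\<close>

lemma closest_point_pythagoras:
  fixes S :: "'a::euclidean_space set"
  assumes "convex S" "closed S" "q \<in> S"
  shows "(norm (closest_point S v - q))\<^sup>2 + (norm (closest_point S v - v))\<^sup>2 \<le> (norm (v - q))\<^sup>2"
proof -
  define P where "P = closest_point S v"
  have "(v - P) \<bullet> (q - P) \<le> 0"
    unfolding P_def by (rule closest_point_dot[OF assms])
  moreover have "(norm (v - q))\<^sup>2 = (norm (v - P))\<^sup>2 + (norm (q - P))\<^sup>2 - 2 * ((v - P) \<bullet> (q - P))"
    by (simp add: power2_norm_eq_inner inner_diff_left inner_diff_right inner_commute)
  ultimately show ?thesis unfolding P_def[symmetric] by (simp add: norm_minus_commute)
qed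

lemma square_convex_comb_le:
  fixes c n :: "'m::finite \<Rightarrow> real"
  assumes "\<And>j. 0 \<le> c j" "(\<Sum>j\<in>UNIV. c j) = 1"
  shows "(\<Sum>j\<in>UNIV. c j * n j)\<^sup>2 \<le> (\<Sum>j\<in>UNIV. c j * (n j)\<^sup>2)"
proof -
  define m where "m = (\<Sum>j\<in>UNIV. c j * n j)"
  have "0 \<le> (\<Sum>j\<in>UNIV. c j * (n j - m)\<^sup>2)" using assms by (intro sum_nonneg) auto
  also have "\<dots> = (\<Sum>j\<in>UNIV. c j * (n j)\<^sup>2) - 2 * m * (\<Sum>j\<in>UNIV. c j * n j) + m\<^sup>2 * (\<Sum>j\<in>UNIV. c j)"
    by (simp add: power2_diff algebra_simps sum.distrib sum_subtractf sum_distrib_left sum_distrib_right)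
  also have "\<dots> = (\<Sum>j\<in>UNIV. c j * (n j)\<^sup>2) - m\<^sup>2" using assms(2) unfolding m_def by (simp add: power2_eq_square)
  finally show ?thesis unfolding m_def by simp
qed

lemma norm_convex_comb_sq_le:
  fixes c :: "'m::finite \<Rightarrow> real" and x :: "'m \<Rightarrow> 'a::real_normed_vector"
  assumes c: "\<And>j. 0 \<le> c j" "(\<Sum>j\<in>UNIV. c j) = 1"
  shows "(norm ((\<Sum>j\<in>UNIV. c j *\<^sub>R x j) - q))\<^sup>2 \<le> (\<Sum>j\<in>UNIV. c j * (norm (x j - q))\<^sup>2)"
proof -
  have "(\<Sum>j\<in>UNIV. c j *\<^sub>R x j) - q = (\<Sum>j\<in>UNIV. c j *\<^sub>R (x j - q))"
    using c(2) by (simp add: scaleR_diff_right sum_subtractf scaleR_sum_left[symmetric])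
  then have "norm ((\<Sum>j\<in>UNIV. c j *\<^sub>R x j) - q) \<le> (\<Sum>j\<in>UNIV. c j * norm (x j - q))"
    using norm_sum[of "\<lambda>j. c j *\<^sub>R (x j - q)" UNIV] c(1) by simp
  then have "(norm ((\<Sum>j\<in>UNIV. c j *\<^sub>R x j) - q))\<^sup>2 \<le> (\<Sum>j\<in>UNIV. c j * norm (x j - q))\<^sup>2"
    by (intro power_mono) auto
  also have "\<dots> \<le> (\<Sum>j\<in>UNIV. c j * (norm (x j - q))\<^sup>2)"
    by (rule square_convex_comb_le[OF c])
  finally show ?thesis .
qed

lemma young_product_le:
  fixes x y \<eta> :: real
  assumes "0 < \<eta>"
  shows "x * y \<le> x\<^sup>2 / (2 * \<eta>) + (\<eta> / 2) * y\<^sup>2"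
proof -
  have "2 * \<eta> * (x * y) \<le> x\<^sup>2 + \<eta>\<^sup>2 * y\<^sup>2"
    using zero_le_power2[of "x - \<eta> * y"] by (simp add: power2_diff algebra_simps power_mult_distrib)
  then show ?thesis using assms by (simp add: field_simps power2_eq_square)
qed

text \<open>Closing the loop between the Lyapunov estimate (residuals \<open>Rs\<close> are paid for by the optimality
  gap \<open>F\<close>), the gap lower bound (paid for by the disagreement \<open>Ds\<close>) and the disagreement bound
  (paid for by the residuals): the coefficient in \<open>dev\<close> is chosen so that only half of \<open>Ds\<close>
  comes back.\<close>

lemma absorb_disagreement:
  fixes Ds F Rs Sb A2 V C K0 K1 Ce p c2 :: real
  assumes C: "0 < C" and K1: "0 < K1" and p: "0 < p"
    and lyap: "2 * F + p * Rs \<le> V + c2 * A2" and gap: "- C * Ds \<le> F"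
    and dis: "Ds \<le> K0 + K1 * Sb" and dev: "Sb \<le> Ce * A2 + p / (4 * C * K1) * Rs"
  shows "Ds \<le> 2 * K0 + V / (2 * C) + (2 * K1 * Ce + c2 / (2 * C)) * A2"
proof -
  have "K1 * Sb \<le> K1 * Ce * A2 + p / (4 * C) * Rs"
    using mult_left_mono[OF dev, of K1] K1 by (simp add: field_simps)
  moreover have "p / (4 * C) * Rs \<le> (V + c2 * A2) / (4 * C) + Ds / 2"
  proof -
    have "p * Rs \<le> V + c2 * A2 + 2 * C * Ds" using lyap gap by linarith
    then have "p * Rs / (4 * C) \<le> (V + c2 * A2 + 2 * C * Ds) / (4 * C)"
      using C by (intro divide_right_mono) auto
    then show ?thesis using C by (simp add: field_simps)
  qed
  ultimately have "Ds \<le> 2 * K0 + 2 * K1 * Ce * A2 + 2 * ((V + c2 * A2) / (4 * C))" using dis by linarith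
  also have "2 * ((V + c2 * A2) / (4 * C)) = V / (2 * C) + c2 / (2 * C) * A2"
    using C by (simp add: field_simps)
  finally show ?thesis by (simp add: algebra_simps)
qed

locale dpg = ujsc_weights E a \<gamma> S + epigraph_problem X f g Y Yk eps
  for E :: "nat \<Rightarrow> ('m::finite \<times> 'm) set" and a \<gamma> S
    and X :: "(real^'n) set" and f :: "'m \<Rightarrow> real^'n \<Rightarrow> real"
    and g :: "'m \<Rightarrow> real^'n \<Rightarrow> real \<Rightarrow> real" and Y Yk :: "'m \<Rightarrow> real set" and eps :: "'m \<Rightarrow> real" +
  fixes \<alpha> :: "nat \<Rightarrow> real" and \<theta> :: "'m \<Rightarrow> nat \<Rightarrow> (real^'n) \<times> (real^'m)"
  assumes alpha_pos: "\<And>t. 0 < \<alpha> t"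
    and alpha_Suc_le: "\<And>t. \<alpha> (Suc t) \<le> \<alpha> t"
    and step: "\<And>i t. \<theta> i (Suc t) =
        closest_point (Omega_i X f g Yk eps i) ((\<Sum>j\<in>UNIV. a t i j *\<^sub>R \<theta> j t) - \<alpha> t *\<^sub>R cvec)"
begin

abbreviation c :: "(real^'n) \<times> (real^'m)" where "c \<equiv> cvec"

definition mixed :: "'m \<Rightarrow> nat \<Rightarrow> (real^'n) \<times> (real^'m)" where
  "mixed i t = (\<Sum>j\<in>UNIV. a t i j *\<^sub>R \<theta> j t)"

definition resid :: "'m \<Rightarrow> nat \<Rightarrow> (real^'n) \<times> (real^'m)" where
  "resid i t = \<theta> i (Suc t) - (mixed i t - \<alpha> t *\<^sub>R cvec)"

definition avg :: "nat \<Rightarrow> (real^'n) \<times> (real^'m)" where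
  "avg t = (\<Sum>j\<in>UNIV. absolute_prob t j *\<^sub>R \<theta> j t)"

definition disagreement :: "nat \<Rightarrow> real" where
  "disagreement t = (\<Sum>b\<in>Basis. spread (\<lambda>i. \<theta> i t \<bullet> b))"

definition deviation :: "nat \<Rightarrow> real" where
  "deviation t = (\<Sum>i\<in>UNIV. norm (\<theta> i (Suc t) - mixed i t))"

lemma alpha_antimono: "s \<le> t \<Longrightarrow> \<alpha> t \<le> \<alpha> s"
  by (induction t rule: dec_induct) (auto intro: order_trans alpha_Suc_le)

lemma theta_Suc: "\<theta> i (Suc t) = closest_point (Om i) (mixed i t - \<alpha> t *\<^sub>R cvec)"
  unfolding mixed_def using step by simp

lemma theta_in_Om: "1 \<le> t \<Longrightarrow> \<theta> i t \<in> Om i"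
  using closest_point_in_set[OF Om_closed Om_nonempty, of i] theta_Suc[of i "t - 1"] by simp

lemma f0_avg: "f0 (avg t) = (\<Sum>j\<in>UNIV. absolute_prob t j * f0 (\<theta> j t))"
  unfolding avg_def f0_def by (simp add: inner_sum_right)

lemma agent_step_sq_le:
  assumes "q \<in> Om i"
  shows "(norm (\<theta> i (Suc t) - q))\<^sup>2 + (norm (resid i t))\<^sup>2
    \<le> (\<Sum>j\<in>UNIV. a t i j * ((norm (\<theta> j t - q))\<^sup>2 - 2 * \<alpha> t * (f0 (\<theta> j t) - f0 q))) + (\<alpha> t)\<^sup>2 * (norm c)\<^sup>2"
proof -
  have "(norm (\<theta> i (Suc t) - q))\<^sup>2 + (norm (resid i t))\<^sup>2 \<le> (norm (mixed i t - \<alpha> t *\<^sub>R cvec - q))\<^sup>2"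
    using closest_point_pythagoras[OF Om_convex Om_closed assms, of "mixed i t - \<alpha> t *\<^sub>R cvec"]
    unfolding theta_Suc resid_def .
  also have "\<dots> = (norm (mixed i t - q))\<^sup>2 - 2 * \<alpha> t * (f0 (mixed i t) - f0 q) + (\<alpha> t)\<^sup>2 * (norm c)\<^sup>2"
  proof -
    have shift: "mixed i t - \<alpha> t *\<^sub>R cvec - q = (mixed i t - q) - \<alpha> t *\<^sub>R cvec" by simp
    have sq: "(norm (x - y))\<^sup>2 = (norm x)\<^sup>2 - 2 * (x \<bullet> y) + (norm y)\<^sup>2" for x y :: "(real^'n) \<times> (real^'m)"
      by (simp add: power2_norm_eq_inner inner_diff_left inner_diff_right inner_commute)
    show ?thesis unfolding shift sq f0_def
      by (simp add: inner_diff_left inner_diff_right inner_commute power_mult_distrib algebra_simps)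
  qed
  also have "(norm (mixed i t - q))\<^sup>2 \<le> (\<Sum>j\<in>UNIV. a t i j * (norm (\<theta> j t - q))\<^sup>2)"
    unfolding mixed_def by (rule norm_convex_comb_sq_le) (auto simp: weight_nonneg weight_row_sum)
  also have "f0 (mixed i t) - f0 q = (\<Sum>j\<in>UNIV. a t i j * (f0 (\<theta> j t) - f0 q))"
    unfolding mixed_def f0_def
    by (simp add: inner_sum_right right_diff_distrib sum_subtractf sum_distrib_right[symmetric] weight_row_sum)
  finally show ?thesis
    by (simp add: sum_subtractf sum.distrib sum_distrib_left right_diff_distrib algebra_simps)
qed

text \<open>The Lyapunov function is the \<open>absolute_prob\<close>-weighted squared distance to \<open>q\<close>;
  the reweighting identity of the absolute probabilities absorbs the mixing step.\<close>

lemma lyapunov_step: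
  assumes q: "q \<in> Om_all"
  shows "(\<Sum>i\<in>UNIV. absolute_prob (Suc t) i * (norm (\<theta> i (Suc t) - q))\<^sup>2)
    \<le> (\<Sum>j\<in>UNIV. absolute_prob t j * (norm (\<theta> j t - q))\<^sup>2) - 2 * \<alpha> t * (f0 (avg t) - f0 q)
       + (\<alpha> t)\<^sup>2 * (norm c)\<^sup>2 - \<gamma> ^ (CARD('m) * S) * (\<Sum>i\<in>UNIV. (norm (resid i t))\<^sup>2)"
proof -
  define Z where "Z j = (norm (\<theta> j t - q))\<^sup>2 - 2 * \<alpha> t * (f0 (\<theta> j t) - f0 q)" for j
  define \<phi> where "\<phi> = absolute_prob (Suc t)"
  have "(\<Sum>i\<in>UNIV. \<phi> i * ((norm (\<theta> i (Suc t) - q))\<^sup>2 + (norm (resid i t))\<^sup>2))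
      \<le> (\<Sum>i\<in>UNIV. \<phi> i * ((\<Sum>j\<in>UNIV. a t i j * Z j) + (\<alpha> t)\<^sup>2 * (norm c)\<^sup>2))"
    unfolding Z_def \<phi>_def
    using q Om_all_subset by (intro sum_mono mult_left_mono agent_step_sq_le absolute_prob_nonneg) auto
  also have "\<dots> = (\<Sum>j\<in>UNIV. absolute_prob t j * Z j) + (\<alpha> t)\<^sup>2 * (norm c)\<^sup>2"
    unfolding \<phi>_def
    by (simp add: distrib_left sum.distrib absolute_prob_reweight sum_distrib_right[symmetric] absolute_prob_sum)
  also have "(\<Sum>j\<in>UNIV. absolute_prob t j * Z j)
      = (\<Sum>j\<in>UNIV. absolute_prob t j * (norm (\<theta> j t - q))\<^sup>2) - 2 * \<alpha> t * (f0 (avg t) - f0 q)"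
  proof -
    have "(\<Sum>j\<in>UNIV. absolute_prob t j * Z j)
        = (\<Sum>j\<in>UNIV. absolute_prob t j * (norm (\<theta> j t - q))\<^sup>2)
          - 2 * \<alpha> t * ((\<Sum>j\<in>UNIV. absolute_prob t j * f0 (\<theta> j t)) - f0 q * (\<Sum>j\<in>UNIV. absolute_prob t j))"
      unfolding Z_def by (simp add: right_diff_distrib sum_subtractf sum_distrib_left sum_distrib_right mult_ac)
    then show ?thesis by (simp add: absolute_prob_sum f0_avg)
  qed
  finally have "(\<Sum>i\<in>UNIV. \<phi> i * (norm (\<theta> i (Suc t) - q))\<^sup>2) + (\<Sum>i\<in>UNIV. \<phi> i * (norm (resid i t))\<^sup>2)
      \<le> (\<Sum>j\<in>UNIV. absolute_prob t j * (norm (\<theta> j t - q))\<^sup>2) - 2 * \<alpha> t * (f0 (avg t) - f0 q)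
         + (\<alpha> t)\<^sup>2 * (norm c)\<^sup>2"
    by (simp add: distrib_left sum.distrib)
  moreover have "\<gamma> ^ (CARD('m) * S) * (\<Sum>i\<in>UNIV. (norm (resid i t))\<^sup>2) \<le> (\<Sum>i\<in>UNIV. \<phi> i * (norm (resid i t))\<^sup>2)"
    unfolding sum_distrib_left \<phi>_def by (intro sum_mono mult_right_mono absolute_prob_lower) auto
  ultimately show ?thesis unfolding \<phi>_def by linarith
qed

lemma deviation_nonneg: "0 \<le> deviation t"
  unfolding deviation_def by (simp add: sum_nonneg)

lemma disagreement_window:
  "disagreement (t + CARD('m) * S) \<le> (1 - \<gamma> ^ (CARD('m) * S)) * disagreement t
     + 2 * (\<Sum>r\<in>{t..<t + CARD('m) * S}. DIM((real^'n) \<times> (real^'m)) * deviation r)"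
  "disagreement (t + n) \<le> disagreement t + 2 * (\<Sum>r\<in>{t..<t+n}. DIM((real^'n) \<times> (real^'m)) * deviation r)"
proof -
  define L where "L = CARD('m) * S"
  define M where "M = real DIM((real^'n) \<times> (real^'m))"
  have window: "spread (\<lambda>i. \<theta> i (t + L) \<bullet> b) \<le> (1 - \<gamma> ^ L) * spread (\<lambda>i. \<theta> i t \<bullet> b)
      + 2 * (\<Sum>r\<in>{t..<t + L}. deviation r)"
    and growth: "spread (\<lambda>i. \<theta> i (t + n) \<bullet> b) \<le> spread (\<lambda>i. \<theta> i t \<bullet> b) + 2 * (\<Sum>r\<in>{t..<t+n}. deviation r)"
    if b: "b \<in> Basis" for b
  proof -
    have "\<And>s i. \<theta> i (Suc s) \<bullet> b = (\<Sum>j\<in>UNIV. a s i j * (\<theta> j s \<bullet> b)) + (\<theta> i (Suc s) - mixed i s) \<bullet> b"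
      unfolding mixed_def by (simp add: inner_diff_left inner_sum_left)
    moreover have "\<bar>(\<theta> i (Suc s) - mixed i s) \<bullet> b\<bar> \<le> deviation s" for i s
      using Basis_le_norm[OF b, of "\<theta> i (Suc s) - mixed i s"] member_le_sum[of i UNIV]
      unfolding deviation_def by (smt (verit) finite norm_ge_zero UNIV_I)
    ultimately show "spread (\<lambda>i. \<theta> i (t + L) \<bullet> b) \<le> (1 - \<gamma> ^ L) * spread (\<lambda>i. \<theta> i t \<bullet> b)
        + 2 * (\<Sum>r\<in>{t..<t + L}. deviation r)"
      and "spread (\<lambda>i. \<theta> i (t + n) \<bullet> b) \<le> spread (\<lambda>i. \<theta> i t \<bullet> b) + 2 * (\<Sum>r\<in>{t..<t+n}. deviation r)"
      using perturbed_spread_window[of "\<lambda>s i. \<theta> i s \<bullet> b" "\<lambda>s i. (\<theta> i (Suc s) - mixed i s) \<bullet> b" deviation]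
      unfolding L_def by blast+
  qed
  have "disagreement (t + L) \<le> (\<Sum>b\<in>Basis. (1 - \<gamma> ^ L) * spread (\<lambda>i. \<theta> i t \<bullet> b)
      + 2 * (\<Sum>r\<in>{t..<t + L}. deviation r))"
    unfolding disagreement_def by (intro sum_mono window)
  then show "disagreement (t + CARD('m) * S) \<le> (1 - \<gamma> ^ (CARD('m) * S)) * disagreement t
     + 2 * (\<Sum>r\<in>{t..<t + CARD('m) * S}. DIM((real^'n) \<times> (real^'m)) * deviation r)"
    unfolding disagreement_def L_def by (simp add: sum.distrib sum_distrib_left mult.left_commute)
  have "disagreement (t + n) \<le> (\<Sum>b\<in>Basis. spread (\<lambda>i. \<theta> i t \<bullet> b) + 2 * (\<Sum>r\<in>{t..<t+n}. deviation r))"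
    unfolding disagreement_def by (intro sum_mono growth)
  then show "disagreement (t + n) \<le> disagreement t
      + 2 * (\<Sum>r\<in>{t..<t+n}. DIM((real^'n) \<times> (real^'m)) * deviation r)"
    unfolding disagreement_def by (simp add: sum.distrib sum_distrib_left mult.left_commute)
qed

lemma norm_diff_le_disagreement: "norm (\<theta> i t - \<theta> j t) \<le> disagreement t"
proof -
  have "norm (\<theta> i t - \<theta> j t) \<le> (\<Sum>b\<in>Basis. \<bar>(\<theta> i t - \<theta> j t) \<bullet> b\<bar>)" by (rule norm_le_l1)
  also have "\<dots> \<le> disagreement t"
    unfolding disagreement_def inner_diff_left
    by (intro sum_mono) (rule abs_diff_le_spread[of "\<lambda>i. \<theta> i t \<bullet> _"])
  finally show ?thesis .
qed

lemma disagreement_nonneg: "0 \<le> disagreement t"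
  unfolding disagreement_def by (simp add: sum_nonneg spread_nonneg)

lemma norm_avg_diff_le: "norm (avg t - \<theta> j t) \<le> disagreement t"
proof -
  have "avg t - \<theta> j t = (\<Sum>k\<in>UNIV. absolute_prob t k *\<^sub>R (\<theta> k t - \<theta> j t))"
    unfolding avg_def using absolute_prob_sum[of t]
    by (simp add: scaleR_diff_right sum_subtractf scaleR_sum_left[symmetric])
  then have "norm (avg t - \<theta> j t) \<le> (\<Sum>k\<in>UNIV. absolute_prob t k * norm (\<theta> k t - \<theta> j t))"
    using norm_sum[of "\<lambda>k. absolute_prob t k *\<^sub>R (\<theta> k t - \<theta> j t)" UNIV] absolute_prob_nonneg by simp
  also have "\<dots> \<le> (\<Sum>k\<in>UNIV. absolute_prob t k * disagreement t)"
    by (intro sum_mono mult_left_mono norm_diff_le_disagreement absolute_prob_nonneg)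
  also have "\<dots> = disagreement t" by (simp add: sum_distrib_right[symmetric] absolute_prob_sum)
  finally show ?thesis .
qed

lemma avg_in_X: "1 \<le> t \<Longrightarrow> fst (avg t) \<in> X"
proof -
  assume t: "1 \<le> t"
  have "fst (avg t) = (\<Sum>j\<in>UNIV. absolute_prob t j *\<^sub>R fst (\<theta> j t))" unfolding avg_def by (simp add: fst_sum)
  also have "\<dots> \<in> X"
    by (rule convex_sum)
       (use X(2) absolute_prob_sum absolute_prob_nonneg theta_in_Om[OF t] in \<open>auto simp: Omega_i_def\<close>)
  finally show ?thesis .
qed

lemma deviation_le: "deviation t \<le> (\<Sum>i\<in>UNIV. norm (resid i t)) + real CARD('m) * (\<alpha> t * norm c)"
proof -
  have "norm (\<theta> i (Suc t) - mixed i t) \<le> norm (resid i t) + \<alpha> t * norm c" for i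
  proof -
    have "\<theta> i (Suc t) - mixed i t = resid i t - \<alpha> t *\<^sub>R c" unfolding resid_def by simp
    then show ?thesis using norm_triangle_ineq4[of "resid i t" "\<alpha> t *\<^sub>R c"] alpha_pos[of t] by simp
  qed
  then have "deviation t \<le> (\<Sum>i\<in>UNIV. norm (resid i t) + \<alpha> t * norm c)"
    unfolding deviation_def by (rule sum_mono)
  then show ?thesis by (simp add: sum.distrib)
qed

lemma weighted_disagreement_bound:
  obtains K0 K1 where "0 \<le> K0" "0 < K1"
    "\<And>T. (\<Sum>t\<in>{1..T}. \<alpha> t * disagreement t) \<le> K0 + K1 * (\<Sum>t\<in>{1..T}. \<alpha> t * deviation t)"
proof -
  define L where "L = CARD('m) * S"
  define \<beta> where "\<beta> = 1 - \<gamma> ^ L"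
  define \<rho> where "\<rho> = root L \<beta>"
  define M where "M = real DIM((real^'n) \<times> (real^'m))"
  have L: "0 < L" unfolding L_def using S_pos by simp
  have \<beta>: "0 < \<beta>" "\<beta> < 1" unfolding \<beta>_def L_def using contraction_factor by auto
  have \<rho>: "\<rho> ^ L = \<beta>" "0 < \<rho>" "\<rho> < 1"
    unfolding \<rho>_def using L \<beta> by (auto simp: real_root_pow_pos2 real_root_gt_zero real_root_lt_1_iff)
  have M: "0 < M" unfolding M_def by (simp add: add_pos_pos)
  have dev: "0 \<le> M * deviation s" for s using M deviation_nonneg by simp
  have unrolled: "disagreement t \<le> (\<rho> ^ (t - 1) * disagreement 1
      + 2 * (\<Sum>s\<in>{1..<t}. \<rho> ^ (t - 1 - s) * (M * deviation s))) / \<beta>" if "1 \<le> t" for t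
    by (rule window_recursion_unroll[OF L \<beta>(1) \<rho>(1,2) less_imp_le[OF \<rho>(3)] dev disagreement_nonneg _ _ that])
       (use disagreement_window in \<open>simp_all add: M_def \<beta>_def L_def sum_distrib_left\<close>)
  define K0 where "K0 = \<alpha> 1 * disagreement 1 / ((1 - \<rho>) * \<beta>)"
  define K1 where "K1 = 2 * M / ((1 - \<rho>) * \<beta>)"
  have "(\<Sum>t\<in>{1..T}. \<alpha> t * disagreement t) \<le> K0 + K1 * (\<Sum>t\<in>{1..T}. \<alpha> t * deviation t)" for T
  proof -
    have "(\<Sum>t\<in>{1..T}. \<alpha> t * disagreement t)
        \<le> (\<alpha> 1 * disagreement 1 / (1 - \<rho>) + 2 / (1 - \<rho>) * (\<Sum>s\<in>{1..T}. \<alpha> s * (M * deviation s))) / \<beta>"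
      by (rule weighted_unrolled_sum_le[OF \<beta>(1) less_imp_le[OF \<rho>(2)] \<rho>(3) dev disagreement_nonneg _
            alpha_antimono unrolled]) (simp_all add: less_imp_le alpha_pos)
    also have "\<dots> = K0 + K1 * (\<Sum>t\<in>{1..T}. \<alpha> t * deviation t)"
    proof -
      have "(\<Sum>s\<in>{1..T}. \<alpha> s * (M * deviation s)) = M * (\<Sum>t\<in>{1..T}. \<alpha> t * deviation t)"
        by (simp add: sum_distrib_left mult_ac)
      moreover have "(A / x + 2 / x * (M * Sd)) / y = A / (x * y) + (2 * M / (x * y)) * Sd"
        if "x \<noteq> 0" "y \<noteq> 0" for x y A Sd :: real
        using that by (simp add: field_simps)
      moreover have "1 - \<rho> \<noteq> 0" "\<beta> \<noteq> 0" using \<rho> \<beta> by auto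
      ultimately show ?thesis unfolding K0_def K1_def by simp
    qed
    finally show ?thesis .
  qed
  moreover have "0 \<le> K0" "0 < K1"
    unfolding K0_def K1_def using alpha_pos[of 1] disagreement_nonneg[of 1] \<rho> \<beta> M by simp_all
  ultimately show ?thesis using that by blast
qed

lemma weighted_deviation_sum_le:
  assumes \<eta>: "0 < \<eta>"
  shows "(\<Sum>t\<in>{1..T}. \<alpha> t * deviation t)
    \<le> (CARD('m) / (2 * \<eta>) + CARD('m) * norm c) * (\<Sum>t\<in>{1..T}. (\<alpha> t)\<^sup>2)
       + (\<eta> / 2) * (\<Sum>t\<in>{1..T}. \<Sum>i\<in>UNIV. (norm (resid i t))\<^sup>2)"
proof -
  have "\<alpha> t * deviation t
    \<le> (CARD('m) / (2 * \<eta>) + CARD('m) * norm c) * (\<alpha> t)\<^sup>2 + (\<eta> / 2) * (\<Sum>i\<in>UNIV. (norm (resid i t))\<^sup>2)"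
    for t
  proof -
    have "\<alpha> t * deviation t \<le> \<alpha> t * ((\<Sum>i\<in>UNIV. norm (resid i t)) + CARD('m) * (\<alpha> t * norm c))"
      using deviation_le[of t] alpha_pos[of t] by (intro mult_left_mono) auto
    also have "\<dots> = (\<Sum>i\<in>UNIV. \<alpha> t * norm (resid i t)) + CARD('m) * norm c * (\<alpha> t)\<^sup>2"
      by (simp add: sum_distrib_left algebra_simps power2_eq_square)
    also have "(\<Sum>i\<in>UNIV. \<alpha> t * norm (resid i t))
        \<le> (\<Sum>i\<in>UNIV. (\<alpha> t)\<^sup>2 / (2 * \<eta>) + (\<eta> / 2) * (norm (resid i t))\<^sup>2)"
      by (intro sum_mono young_product_le \<eta>)
    also have "\<dots> = CARD('m) * ((\<alpha> t)\<^sup>2 / (2 * \<eta>)) + (\<eta> / 2) * (\<Sum>i\<in>UNIV. (norm (resid i t))\<^sup>2)"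
      by (simp add: sum.distrib sum_distrib_left)
    finally show ?thesis by (simp add: algebra_simps)
  qed
  then have "(\<Sum>t\<in>{1..T}. \<alpha> t * deviation t) \<le> (\<Sum>t\<in>{1..T}. (CARD('m) / (2 * \<eta>) + CARD('m) * norm c)
      * (\<alpha> t)\<^sup>2 + (\<eta> / 2) * (\<Sum>i\<in>UNIV. (norm (resid i t))\<^sup>2))"
    by (rule sum_mono)
  then show ?thesis by (simp add: sum.distrib sum_distrib_left)
qed

lemma lyapunov_sum:
  assumes q: "q \<in> Om_all"
  shows "2 * (\<Sum>t\<in>{1..T}. \<alpha> t * (f0 (avg t) - f0 q))
      + \<gamma> ^ (CARD('m) * S) * (\<Sum>t\<in>{1..T}. \<Sum>i\<in>UNIV. (norm (resid i t))\<^sup>2)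
    \<le> (\<Sum>j\<in>UNIV. absolute_prob 1 j * (norm (\<theta> j 1 - q))\<^sup>2) + (norm c)\<^sup>2 * (\<Sum>t\<in>{1..T}. (\<alpha> t)\<^sup>2)"
proof -
  define V where "V t = (\<Sum>j\<in>UNIV. absolute_prob t j * (norm (\<theta> j t - q))\<^sup>2)" for t
  have "0 \<le> V (Suc T)" unfolding V_def by (intro sum_nonneg mult_nonneg_nonneg absolute_prob_nonneg) auto
  moreover have "V (Suc T) - V 1 = (\<Sum>t\<in>{1..T}. V (Suc t) - V t)"
    by (induction T) (simp_all add: atLeastAtMostSuc_conv)
  moreover have "(\<Sum>t\<in>{1..T}. V (Suc t) - V t) \<le> (\<Sum>t\<in>{1..T}. - 2 * (\<alpha> t * (f0 (avg t) - f0 q))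
      + (norm c)\<^sup>2 * (\<alpha> t)\<^sup>2 - \<gamma> ^ (CARD('m) * S) * (\<Sum>i\<in>UNIV. (norm (resid i t))\<^sup>2))"
    using lyapunov_step[OF q] unfolding V_def by (intro sum_mono) (simp add: algebra_simps)
  ultimately show ?thesis unfolding V_def[symmetric]
    by (simp add: sum.distrib sum_subtractf sum_distrib_left sum_negf)
qed

lemma f0_diff_le_disagreement: "\<bar>f0 (\<theta> i t) - f0 (avg t)\<bar> \<le> norm c * disagreement t"
proof -
  have "\<bar>f0 (\<theta> i t) - f0 (avg t)\<bar> = \<bar>c \<bullet> (\<theta> i t - avg t)\<bar>" unfolding f0_def by (simp add: inner_diff_right)
  also have "\<dots> \<le> norm c * norm (avg t - \<theta> i t)"
    using Cauchy_Schwarz_ineq2[of c "\<theta> i t - avg t"] by (simp add: norm_minus_commute)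
  also have "\<dots> \<le> norm c * disagreement t" by (intro mult_left_mono norm_avg_diff_le) auto
  finally show ?thesis .
qed

lemma avg_gap_sum_lower:
  assumes opt_lower:
    "\<And>z p \<epsilon>. fst z \<in> X \<Longrightarrow> (\<And>j. p j \<in> Om j) \<Longrightarrow> (\<And>j. norm (z - p j) \<le> \<epsilon>) \<Longrightarrow> opt - C * \<epsilon> \<le> f0 z"
  shows "- C * (\<Sum>t\<in>{1..T}. \<alpha> t * disagreement t) \<le> (\<Sum>t\<in>{1..T}. \<alpha> t * (f0 (avg t) - opt))"
proof -
  have "opt - C * disagreement t \<le> f0 (avg t)" if "t \<in> {1..T}" for t
    using that by (intro opt_lower[of "avg t" "\<lambda>j. \<theta> j t"] avg_in_X theta_in_Om norm_avg_diff_le) auto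
  then have "(\<Sum>t\<in>{1..T}. \<alpha> t * (- C * disagreement t)) \<le> (\<Sum>t\<in>{1..T}. \<alpha> t * (f0 (avg t) - opt))"
    using alpha_pos by (intro sum_mono mult_left_mono) (auto simp: less_imp_le algebra_simps)
  then show ?thesis by (simp add: sum_distrib_left algebra_simps)
qed

lemma disagreement_and_avg_gap_sums:
  obtains D0 D1 G0 G1 where "0 \<le> D0" "0 \<le> D1" "0 \<le> G0" "0 \<le> G1"
    "\<And>T. (\<Sum>t\<in>{1..T}. \<alpha> t * disagreement t) \<le> D0 + D1 * (\<Sum>t\<in>{1..T}. (\<alpha> t)\<^sup>2)"
    "\<And>T. \<bar>\<Sum>t\<in>{1..T}. \<alpha> t * (f0 (avg t) - opt)\<bar> \<le> G0 + G1 * (\<Sum>t\<in>{1..T}. (\<alpha> t)\<^sup>2)"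
proof -
  obtain \<theta>s where \<theta>s: "\<theta>s \<in> Om_all" "f0 \<theta>s = opt" using optimum_attained by blast
  obtain C where C: "0 < C" and opt_lower:
    "\<And>z p \<epsilon>. fst z \<in> X \<Longrightarrow> (\<And>j. p j \<in> Om j) \<Longrightarrow> (\<And>j. norm (z - p j) \<le> \<epsilon>) \<Longrightarrow> opt - C * \<epsilon> \<le> f0 z"
    using opt_lower_bound by blast
  obtain K0 K1 where K0: "0 \<le> K0" and K1: "0 < K1" and dis:
    "\<And>T. (\<Sum>t\<in>{1..T}. \<alpha> t * disagreement t) \<le> K0 + K1 * (\<Sum>t\<in>{1..T}. \<alpha> t * deviation t)"
    using weighted_disagreement_bound by blast
  define p where "p = \<gamma> ^ (CARD('m) * S)"
  define \<eta> where "\<eta> = p / (2 * C * K1)"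
  define Ce where "Ce = CARD('m) / (2 * \<eta>) + CARD('m) * norm c"
  define V where "V = (\<Sum>j\<in>UNIV. absolute_prob 1 j * (norm (\<theta> j 1 - \<theta>s))\<^sup>2)"
  define D0 where "D0 = 2 * K0 + V / (2 * C)"
  define D1 where "D1 = 2 * K1 * Ce + (norm c)\<^sup>2 / (2 * C)"
  have p: "0 < p" unfolding p_def using gamma_pos by simp
  have V: "0 \<le> V" unfolding V_def by (intro sum_nonneg mult_nonneg_nonneg absolute_prob_nonneg) auto
  have D: "0 \<le> D0" "0 \<le> D1" unfolding D0_def D1_def Ce_def \<eta>_def using K0 K1 C p V by simp_all
  have bounds: "Ds \<le> D0 + D1 * A2 \<and> \<bar>F\<bar> \<le> V / 2 + C * D0 + ((norm c)\<^sup>2 / 2 + C * D1) * A2"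
    if Ds: "Ds = (\<Sum>t\<in>{1..T}. \<alpha> t * disagreement t)" and F: "F = (\<Sum>t\<in>{1..T}. \<alpha> t * (f0 (avg t) - opt))"
      and A2: "A2 = (\<Sum>t\<in>{1..T}. (\<alpha> t)\<^sup>2)" for T Ds F A2
  proof -
    define Rs where "Rs = (\<Sum>t\<in>{1..T}. \<Sum>i\<in>UNIV. (norm (resid i t))\<^sup>2)"
    have lyap: "2 * F + p * Rs \<le> V + (norm c)\<^sup>2 * A2"
      using lyapunov_sum[OF \<theta>s(1), of T] unfolding F Rs_def V_def A2 p_def \<theta>s(2) .
    have gap: "- C * Ds \<le> F" unfolding Ds F by (rule avg_gap_sum_lower[OF opt_lower])
    have "\<eta> / 2 = p / (4 * C * K1)" unfolding \<eta>_def by simp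
    then have "(\<Sum>t\<in>{1..T}. \<alpha> t * deviation t) \<le> Ce * A2 + p / (4 * C * K1) * Rs"
      using weighted_deviation_sum_le[of \<eta> T] C K1 p unfolding Ce_def A2 Rs_def \<eta>_def by simp
    with absorb_disagreement[OF C K1 p lyap gap] dis[of T]
    have Ds_le: "Ds \<le> D0 + D1 * A2" unfolding Ds D0_def D1_def by simp
    have "0 \<le> p * Rs" "0 \<le> (norm c)\<^sup>2 * A2" "0 \<le> C * Ds"
      using p C unfolding Rs_def A2 Ds by (simp_all add: sum_nonneg alpha_pos less_imp_le disagreement_nonneg)
    then have "\<bar>F\<bar> \<le> V / 2 + (norm c)\<^sup>2 / 2 * A2 + C * Ds"
      using lyap gap V unfolding abs_le_iff by (intro conjI) (simp_all add: field_simps)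
    also have "\<dots> \<le> V / 2 + (norm c)\<^sup>2 / 2 * A2 + C * (D0 + D1 * A2)"
      using Ds_le C by simp
    finally show ?thesis using Ds_le by (simp add: algebra_simps)
  qed
  show ?thesis
    by (rule that[of D0 D1 "V / 2 + C * D0" "(norm c)\<^sup>2 / 2 + C * D1"])
       (use D V C bounds in \<open>simp_all add: less_imp_le\<close>)
qed

lemma weighted_gap_sum_bound:
  obtains P0 P1 where "0 \<le> P0" "0 \<le> P1"
    "\<And>i T. \<bar>\<Sum>r\<le>T. \<alpha> r * (f0 (\<theta> i r) - opt)\<bar> \<le> P0 + P1 * (\<Sum>t\<in>{1..T}. (\<alpha> t)\<^sup>2)"
proof -
  obtain D0 D1 G0 G1 where D: "0 \<le> D0" "0 \<le> D1" and G: "0 \<le> G0" "0 \<le> G1"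
    and dis: "\<And>T. (\<Sum>t\<in>{1..T}. \<alpha> t * disagreement t) \<le> D0 + D1 * (\<Sum>t\<in>{1..T}. (\<alpha> t)\<^sup>2)"
    and gap: "\<And>T. \<bar>\<Sum>t\<in>{1..T}. \<alpha> t * (f0 (avg t) - opt)\<bar> \<le> G0 + G1 * (\<Sum>t\<in>{1..T}. (\<alpha> t)\<^sup>2)"
    using disagreement_and_avg_gap_sums by blast
  define H0 where "H0 = \<alpha> 0 * (\<Sum>i\<in>UNIV. \<bar>f0 (\<theta> i 0) - opt\<bar>)"
  have bound: "\<bar>\<Sum>r\<le>T. \<alpha> r * (f0 (\<theta> i r) - opt)\<bar>
      \<le> (H0 + norm c * D0 + G0) + (norm c * D1 + G1) * (\<Sum>t\<in>{1..T}. (\<alpha> t)\<^sup>2)" for i T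
  proof -
    have "(\<Sum>r\<le>T. \<alpha> r * (f0 (\<theta> i r) - opt)) = \<alpha> 0 * (f0 (\<theta> i 0) - opt)
        + (\<Sum>t\<in>{1..T}. \<alpha> t * (f0 (\<theta> i t) - f0 (avg t))) + (\<Sum>t\<in>{1..T}. \<alpha> t * (f0 (avg t) - opt))"
      unfolding atMost_atLeast0 by (simp add: sum.atLeast_Suc_atMost sum.distrib[symmetric] algebra_simps)
    moreover have "\<bar>\<alpha> 0 * (f0 (\<theta> i 0) - opt)\<bar> \<le> H0"
      unfolding H0_def using alpha_pos[of 0] member_le_sum[of i UNIV "\<lambda>i. \<bar>f0 (\<theta> i 0) - opt\<bar>"]
      by (simp add: abs_mult mult_left_mono)
    moreover have "\<bar>\<Sum>t\<in>{1..T}. \<alpha> t * (f0 (\<theta> i t) - f0 (avg t))\<bar>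
        \<le> norm c * (\<Sum>t\<in>{1..T}. \<alpha> t * disagreement t)"
      unfolding sum_distrib_left
      by (rule order_trans[OF sum_abs sum_mono])
         (use f0_diff_le_disagreement alpha_pos in \<open>simp add: abs_mult mult_left_mono less_imp_le mult_ac\<close>)
    moreover have "norm c * (\<Sum>t\<in>{1..T}. \<alpha> t * disagreement t) \<le> norm c * (D0 + D1 * (\<Sum>t\<in>{1..T}. (\<alpha> t)\<^sup>2))"
      using dis by (simp add: mult_left_mono)
    ultimately show ?thesis using gap[of T] by (simp add: algebra_simps)
  qed
  have "0 \<le> H0" unfolding H0_def using alpha_pos[of 0] by (simp add: sum_nonneg)
  then have "0 \<le> H0 + norm c * D0 + G0" "0 \<le> norm c * D1 + G1" using D G by simp_all
  from that[OF this bound] show ?thesis .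
qed

end

section \<open>Step sizes of order \<open>1/\<surd>t\<close>\<close>

lemma sum_inverse_Suc_le_ln: "(\<Sum>t\<in>{1..T}. 1 / (real t + 1)) \<le> ln (real T + 1)"
proof (induction T)
  case (Suc T)
  have "1 / (real T + 2) \<le> ln (real T + 2) - ln (real T + 1)"
  proof -
    have "ln ((real T + 1) / (real T + 2)) \<le> (real T + 1) / (real T + 2) - 1"
      by (rule ln_le_minus_one) auto
    moreover have "ln ((real T + 1) / (real T + 2)) = ln (real T + 1) - ln (real T + 2)"
      by (simp add: ln_div)
    moreover have "(real T + 1) / (real T + 2) - 1 = - (1 / (real T + 2))"
      by (simp add: field_simps)
    ultimately show ?thesis by linarith
  qed
  then show ?case using Suc.IH by (simp add: add.commute)
qed simp

lemma sum_square_le_ln: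
  assumes "\<And>t. 0 \<le> \<alpha> t" "\<And>t. \<alpha> t \<le> \<kappa> / sqrt (real t + 1)"
  shows "(\<Sum>t\<in>{1..T}. (\<alpha> t)\<^sup>2) \<le> \<kappa>\<^sup>2 * ln (real T + 1)"
proof -
  have "(\<Sum>t\<in>{1..T}. (\<alpha> t)\<^sup>2) \<le> (\<Sum>t\<in>{1..T}. \<kappa>\<^sup>2 * (1 / (real t + 1)))"
  proof (rule sum_mono)
    fix t
    have "(\<alpha> t)\<^sup>2 \<le> (\<kappa> / sqrt (real t + 1))\<^sup>2" using assms by (intro power_mono) auto
    then show "(\<alpha> t)\<^sup>2 \<le> \<kappa>\<^sup>2 * (1 / (real t + 1))" by (simp add: power_divide)
  qed
  also have "\<dots> \<le> \<kappa>\<^sup>2 * ln (real T + 1)"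
    unfolding sum_distrib_left[symmetric] by (intro mult_left_mono sum_inverse_Suc_le_ln) auto
  finally show ?thesis .
qed

lemma sqrt_le_sum:
  assumes "0 \<le> \<kappa>" "\<And>t. \<kappa> / sqrt (real t + 1) \<le> \<alpha> t"
  shows "\<kappa> * sqrt (real T + 1) \<le> (\<Sum>t\<le>T. \<alpha> t)"
proof -
  have "sqrt (real T + 1) * sqrt (real T + 1) = real T + 1" "0 < sqrt (real T + 1)" by simp_all
  then have "\<kappa> * sqrt (real T + 1) = (real T + 1) * (\<kappa> / sqrt (real T + 1))"
    by (simp add: field_simps)
  also have "\<dots> = (\<Sum>t\<le>T. \<kappa> / sqrt (real T + 1))" by simp
  also have "\<dots> \<le> (\<Sum>t\<le>T. \<kappa> / sqrt (real t + 1))"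
    by (intro sum_mono divide_left_mono) (use assms in auto)
  also have "\<dots> \<le> (\<Sum>t\<le>T. \<alpha> t)" by (intro sum_mono assms(2))
  finally show ?thesis .
qed

lemma weighted_average_rate:
  fixes \<alpha> x :: "nat \<Rightarrow> real"
  assumes \<kappa>: "0 < \<kappa>" and lower: "\<And>t. \<kappa> / sqrt (real t + 1) \<le> \<alpha> t"
    and P: "0 \<le> P0" "0 \<le> P1"
    and bound: "\<And>T. \<bar>\<Sum>r\<le>T. \<alpha> r * x r\<bar> \<le> P0 + P1 * ln (real T + 1)"
    and t: "1 \<le> t"
  shows "\<bar>(\<Sum>r\<le>t. \<alpha> r * x r) / (\<Sum>r\<le>t. \<alpha> r)\<bar> \<le> (P0 / ln 2 + P1) / \<kappa> * ln (real t + 1) / sqrt (real t)"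
proof -
  have sqrt_t: "0 < \<kappa> * sqrt (real t)" using \<kappa> t by simp
  have "\<kappa> * sqrt (real t) \<le> \<kappa> * sqrt (real t + 1)" using \<kappa> by (intro mult_left_mono) auto
  also have "\<dots> \<le> (\<Sum>r\<le>t. \<alpha> r)" by (rule sqrt_le_sum) (use \<kappa> lower in auto)
  finally have sum: "\<kappa> * sqrt (real t) \<le> (\<Sum>r\<le>t. \<alpha> r)" .
  have ln: "ln 2 \<le> ln (real t + 1)" "0 < ln (2::real)" using t by simp_all
  have "P0 + P1 * ln (real t + 1) \<le> (P0 / ln 2 + P1) * ln (real t + 1)"
    using mult_left_mono[OF ln(1), of "P0 / ln 2"] P ln(2) by (simp add: algebra_simps)
  then have num: "\<bar>\<Sum>r\<le>t. \<alpha> r * x r\<bar> \<le> (P0 / ln 2 + P1) * ln (real t + 1)"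
    using bound[of t] by linarith
  have "0 \<le> (P0 / ln 2 + P1) * ln (real t + 1)" using P ln by simp
  have "\<bar>(\<Sum>r\<le>t. \<alpha> r * x r) / (\<Sum>r\<le>t. \<alpha> r)\<bar> = \<bar>\<Sum>r\<le>t. \<alpha> r * x r\<bar> / (\<Sum>r\<le>t. \<alpha> r)"
    using sum sqrt_t by (simp add: abs_divide)
  also have "\<dots> \<le> (P0 / ln 2 + P1) * ln (real t + 1) / (\<kappa> * sqrt (real t))"
    by (rule frac_le[OF \<open>0 \<le> (P0 / ln 2 + P1) * ln (real t + 1)\<close> num sqrt_t sum])
  also have "\<dots> = (P0 / ln 2 + P1) / \<kappa> * ln (real t + 1) / sqrt (real t)"
    by (simp only: times_divide_eq_left divide_divide_eq_left)
  finally show ?thesis .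
qed

lemma f0_weighted_average:
  fixes \<theta> :: "nat \<Rightarrow> (real^'n) \<times> (real^'m::finite)"
  assumes "(\<Sum>r\<in>A. w r) \<noteq> 0"
  shows "f0 ((\<Sum>r\<in>A. w r *\<^sub>R \<theta> r) /\<^sub>R (\<Sum>r\<in>A. w r)) - v = (\<Sum>r\<in>A. w r * (f0 (\<theta> r) - v)) / (\<Sum>r\<in>A. w r)"
proof -
  define s where "s = (\<Sum>r\<in>A. w r)"
  have "f0 ((\<Sum>r\<in>A. w r *\<^sub>R \<theta> r) /\<^sub>R s) = (\<Sum>r\<in>A. w r * f0 (\<theta> r)) / s"
    unfolding f0_def by (simp add: inner_sum_right divide_inverse mult.commute)
  moreover have "(\<Sum>r\<in>A. w r * (f0 (\<theta> r) - v)) = (\<Sum>r\<in>A. w r * f0 (\<theta> r)) - v * s"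
    unfolding s_def by (simp add: right_diff_distrib sum_subtractf sum_distrib_left mult.commute)
  ultimately show ?thesis using assms unfolding s_def[symmetric] by (simp add: diff_divide_distrib)
qed

theorem theorem2:
  fixes E :: "nat \<Rightarrow> ('m::finite \<times> 'm) set"
    and a :: "nat \<Rightarrow> 'm \<Rightarrow> 'm \<Rightarrow> real"
    and \<gamma> :: real
    and X :: "(real^'n) set"
    and f :: "'m \<Rightarrow> real^'n \<Rightarrow> real"
    and g :: "'m \<Rightarrow> real^'n \<Rightarrow> real \<Rightarrow> real"
    and Y Yk :: "'m \<Rightarrow> real set"
    and eps :: "'m \<Rightarrow> real"
    and \<alpha> :: "nat \<Rightarrow> real"
    and \<kappa>1 \<kappa>2 :: real
    and \<theta> :: "'m \<Rightarrow> nat \<Rightarrow> (real^'n) \<times> (real^'m)"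
    and \<theta>hat :: "'m \<Rightarrow> nat \<Rightarrow> (real^'n) \<times> (real^'m)"
  assumes ujsc: "UJSC E"
    and weights: "weight_rules E a \<gamma>"
    and X: "X \<noteq> {}" "compact X" "convex X"
    and f_convex: "\<And>i. convex_on UNIV (f i)"
    and Y: "\<And>i. Y i \<noteq> {}" "\<And>i. compact (Y i)" "\<And>i. convex (Y i)"
    and g_cont: "\<And>i. continuous_on (X \<times> Y i) (\<lambda>(x, y). g i x y)"
    and g_convex: "\<And>i y. y \<in> Y i \<Longrightarrow> convex_on UNIV (\<lambda>x. g i x y)"
    and Yk: "\<And>i. finite (Yk i)" "\<And>i. Yk i \<subseteq> Y i"
    and eps: "\<And>i. eps i > 0"
    and feasible: "\<exists>x\<in>X. \<forall>i. \<forall>y\<in>Yk i. g i x y \<le> - eps i"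
    and interior: "\<exists>x\<in>X. \<forall>i. \<forall>y\<in>Yk i. g i x y < - eps i"
    and alpha_pos: "\<And>t. \<alpha> t > 0"
    and alpha_noninc: "\<And>t. \<alpha> (Suc t) \<le> \<alpha> t"
    and kappa: "0 < \<kappa>1" "\<kappa>1 \<le> \<kappa>2"
    and alpha_bounds: "\<And>t. \<kappa>1 / sqrt (real t + 1) \<le> \<alpha> t"
                      "\<And>t. \<alpha> t \<le> \<kappa>2 / sqrt (real t + 1)"
    and dpg: "\<And>i t. \<theta> i (Suc t) =
                closest_point (Omega_i X f g Yk eps i) ((\<Sum>j\<in>UNIV. a t i j *\<^sub>R \<theta> j t) - \<alpha> t *\<^sub>R cvec)"
    and theta_hat: "\<And>i t. \<theta>hat i t =
                (\<Sum>r\<le>t. \<alpha> r *\<^sub>R \<theta> i r) /\<^sub>R (\<Sum>\<tau>\<le>t. \<alpha> \<tau>)"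
  shows "\<exists>K. \<forall>i. \<forall>t\<ge>1. \<bar>f0 (\<theta>hat i t) - f0star X f g Yk eps\<bar> \<le> K * ln (real t + 1) / sqrt (real t)"
proof -
  obtain S where "0 < S" "\<And>t. strongly_connected (\<Union>s\<in>{t..<t+S}. E s)"
    using ujsc unfolding UJSC_def by blast
  then interpret dpg E a \<gamma> S X f g Y Yk eps \<alpha> \<theta>
    by unfold_locales (use weights X f_convex g_convex Yk interior alpha_pos alpha_noninc dpg in auto)
  obtain P0 P1 where P: "0 \<le> P0" "0 \<le> P1"
    and gap_sum: "\<And>i T. \<bar>\<Sum>r\<le>T. \<alpha> r * (f0 (\<theta> i r) - opt)\<bar> \<le> P0 + P1 * (\<Sum>t\<in>{1..T}. (\<alpha> t)\<^sup>2)"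
    using weighted_gap_sum_bound by blast
  have gap_sum_ln: "\<bar>\<Sum>r\<le>T. \<alpha> r * (f0 (\<theta> i r) - opt)\<bar> \<le> P0 + P1 * \<kappa>2\<^sup>2 * ln (real T + 1)" for i T
    using gap_sum[of i T] mult_left_mono[OF sum_square_le_ln[of \<alpha> \<kappa>2 T] P(2)]
      alpha_pos alpha_bounds(2) by (simp add: less_imp_le mult.assoc)
  have "\<bar>f0 (\<theta>hat i t) - opt\<bar> \<le> (P0 / ln 2 + P1 * \<kappa>2\<^sup>2) / \<kappa>1 * ln (real t + 1) / sqrt (real t)"
    if t: "1 \<le> t" for i t
  proof -
    have "0 < (\<Sum>r\<le>t. \<alpha> r)" using alpha_pos by (simp add: sum_pos)
    then have "f0 (\<theta>hat i t) - opt = (\<Sum>r\<le>t. \<alpha> r * (f0 (\<theta> i r) - opt)) / (\<Sum>r\<le>t. \<alpha> r)"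
      unfolding theta_hat by (simp add: f0_weighted_average)
    with weighted_average_rate[OF kappa(1) alpha_bounds(1) P(1) _ gap_sum_ln t] P show ?thesis
      by simp
  qed
  then show ?thesis by blast
qed

end
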